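(* The map $\Phi$ is a bijection from $\mathcal{N}_{n,1}$ onto $\mathcal{M}_{n,1}$.
   Context: An alternating sign matrix (ASM) of order $n$ is an $n\times n$ matrix $A=(a_{ij})$ with entries in $\{-1,0,1\}$ such that in every row and every column the nonzero entries alternate in sign, the first and the last nonzero entries being $1$. $\mathcal{A}_{n,1}$ denotes the set of order-$n$ ASMs having exactly one entry equal to $-1$. Let $A\in\mathcal{A}_{n,1}$. The opening column is the column containing the unique $-1$; the closing row is the row containing the $-1$; the opening row is the row of the $1$ of the opening column lying above the $-1$. The columns strictly to the left (resp. right) of the opening column form the left side (resp. right side). The closing row contains exactly two $1$'s, one in each side; the one in the right side is the closing $1$ and its column is the closing column. $A$ is neutral if the closing row is the row immediately below the opening row; $\mathcal{A}_{n,1}^{0}$ denotes the set of neutral elements of $\mathcal{A}_{n,1}$. For $N\in\mathcal{A}_{n,1}^{0}$: the leading $1$ is the highest $1$ in the left side strictly below the opening row; its column is the leading column; the leading cell consists of the entries strictly below the opening row and strictly between the leading column and the opening column, and $\ell(N)$ is the sum of its entries. The closing cell consists of the entries strictly below the closing row and strictly between the opening column and the closing column, and $c(N)$ is the sum of its entries. $\mathcal{N}_{n,1}=\{(N,E)\,:\,N\in\mathcal{A}_{n,1}^{0},\ E\in\mathbb{Z},\ -\ell(N)\le E\le c(N)\}$. Generalized inversion table: for $(N,E)\in\mathcal{N}_{n,1}$, let $n+1-k$ be the index of the opening row of $N$ (so the closing row is row $n+2-k$). For $1\le i\le n$, $a_i$ is the sum of the entries of $N$ lying strictly below row $n+1-i$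 and strictly to the left of the unique $1$ of row $n+1-i$ (for $i=k-1$, i.e. the closing row, the leftmost $1$ of that row is used). Let $b=c(N)$ and $\beta=E+\ell(N)$. The generalized inversion table of $(N,E)$ is $(k;a_1,\dots,a_n;b,\beta)$. Mixed configurations: let $\mathcal{G}_n=\{(x,y)\in\mathbb{Z}^2: 0\le x<y\le n\}$. Steps are $E=(1,0)$, $F=(1,0)$ (a distinct letter from $E$ with the same displacement), $S=(0,-1)$, $N=(1,1)$. A mixed path is a lattice path all of whose vertices lie in $\mathcal{G}_n$, given as a word $LR$ where the Left part $L$ is a word in $\{S,E\}$ and the Right part $R$ is a word in $\{F,N\}$; the vertex where $L$ ends and $R$ begins is the junction. An order-$n$ mixed configuration is a sequence $(\omega_1,\dots,\omega_n)$ of mixed paths such that for some permutation $\sigma$ of $\{1,\dots,n\}$, $\omega_i$ starts at $(0,i)$ and ends at $(\sigma(i)-1,\sigma(i))$, the Left parts are pairwise vertex-disjoint, and the Right parts are pairwise vertex-disjoint. $\mathcal{M}_{n,s}$ is the set of order-$n$ mixed configurations containing exactly $s$ $N$-steps in total. For $(N,E)\in\mathcal{N}_{n,1}$ with generalized inversion table $(k;a_1,\dots,a_n;b,\beta)$, $\Phi(N,E)=(\omega_1,\dots,\omega_n)$ where $\omega_i=E^{a_i}F^{i-1-a_i}$ for $i\notin\{k-1,k\}$, $\omega_{k-1}=E^{a_{k-1}}F^{\beta}NF^{k-2-a_{k-1}-\beta}$, and $\omega_k=E^{a_k}SE^{b}F^{k-2-a_k-b}$ (exponents denote repetition of steps;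 $\omega_i$ starts at $(0,i)$). *)

theory Defs
  imports Main
begin

text \<open>An order-n matrix is represented as a function nat => nat => int, rows and
columns indexed by 1..n (row 1 is the top row, column 1 the leftmost), with all
entries outside {1..n} x {1..n} equal to 0.\<close>

type_synonym mat = "nat \<Rightarrow> nat \<Rightarrow> int"

definition nz_row :: "nat \<Rightarrow> mat \<Rightarrow> nat \<Rightarrow> int list" where
  "nz_row n A i = filter (\<lambda>x. x \<noteq> 0) (map (\<lambda>j. A i j) [1..<n+1])"

definition nz_col :: "nat \<Rightarrow> mat \<Rightarrow> nat \<Rightarrow> int list" where
  "nz_col n A j = filter (\<lambda>x. x \<noteq> 0) (map (\<lambda>i. A i j) [1..<n+1])"

definition alternating :: "int list \<Rightarrow> bool" where
  "alternating xs \<longleftrightarrow> xs \<noteq> [] \<and> hd xs = 1 \<and> last xs = 1 \<and>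
     (\<forall>k. Suc k < length xs \<longrightarrow> xs ! Suc k = - (xs ! k))"

definition is_ASM :: "nat \<Rightarrow> mat \<Rightarrow> bool" where
  "is_ASM n A \<longleftrightarrow>
     (\<forall>i j. A i j \<noteq> 0 \<longrightarrow> i \<in> {1..n} \<and> j \<in> {1..n}) \<and>
     (\<forall>i j. A i j \<in> {-1, 0, 1}) \<and>
     (\<forall>i\<in>{1..n}. alternating (nz_row n A i)) \<and>
     (\<forall>j\<in>{1..n}. alternating (nz_col n A j))"

definition ASM1 :: "nat \<Rightarrow> mat set" where
  "ASM1 n = {A. is_ASM n A \<and> card {(i, j). i \<in> {1..n} \<and> j \<in> {1..n} \<and> A i j = -1} = 1}"

definition closing_row :: "mat \<Rightarrow> nat" where
  "closing_row A = fst (THE p. A (fst p) (snd p) = -1)"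

definition opening_col :: "mat \<Rightarrow> nat" where
  "opening_col A = snd (THE p. A (fst p) (snd p) = -1)"

definition opening_row :: "mat \<Rightarrow> nat" where
  "opening_row A = (THE i. i < closing_row A \<and> A i (opening_col A) = 1)"

definition closing_col :: "mat \<Rightarrow> nat" where
  "closing_col A = (THE j. opening_col A < j \<and> A (closing_row A) j = 1)"

definition neutral :: "mat \<Rightarrow> bool" where
  "neutral A \<longleftrightarrow> closing_row A = opening_row A + 1"

definition leading_row :: "mat \<Rightarrow> nat" where
  "leading_row A = (LEAST i. opening_row A < i \<and> (\<exists>j. j < opening_col A \<and> A i j = 1))"

definition leading_col :: "mat \<Rightarrow> nat" where
  "leading_col A = (THE j. j < opening_col A \<and> A (leading_row A) j = 1)"

definition ell :: "nat \<Rightarrow> mat \<Rightarrow> int" where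
  "ell n A = (\<Sum>i\<in>{opening_row A<..n}. \<Sum>j\<in>{leading_col A<..<opening_col A}. A i j)"

definition cval :: "nat \<Rightarrow> mat \<Rightarrow> int" where
  "cval n A = (\<Sum>i\<in>{closing_row A<..n}. \<Sum>j\<in>{opening_col A<..<closing_col A}. A i j)"

definition NN1 :: "nat \<Rightarrow> (mat \<times> int) set" where
  "NN1 n = {(A, E). A \<in> ASM1 n \<and> neutral A \<and> - ell n A \<le> E \<and> E \<le> cval n A}"

definition kidx :: "nat \<Rightarrow> mat \<Rightarrow> nat" where
  "kidx n A = n + 1 - opening_row A"

text \<open>Leftmost 1 of a row (the unique 1 for rows other than the closing row).\<close>
definition leftmost1 :: "mat \<Rightarrow> nat \<Rightarrow> nat" where
  "leftmost1 A r = (LEAST j. A r j = 1)"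

definition ainv :: "nat \<Rightarrow> mat \<Rightarrow> nat \<Rightarrow> int" where
  "ainv n A i = (\<Sum>r\<in>{n+1-i<..n}. \<Sum>j\<in>{1..<leftmost1 A (n+1-i)}. A r j)"

datatype step = StepE | StepF | StepS | StepN

fun disp :: "step \<Rightarrow> int \<times> int" where
  "disp StepE = (1, 0)"
| "disp StepF = (1, 0)"
| "disp StepS = (0, -1)"
| "disp StepN = (1, 1)"

fun verts :: "int \<times> int \<Rightarrow> step list \<Rightarrow> (int \<times> int) list" where
  "verts p [] = [p]"
| "verts p (s # w) = p # verts (fst p + fst (disp s), snd p + snd (disp s)) w"

definition grid :: "nat \<Rightarrow> (int \<times> int) set" where
  "grid n = {(x, y). 0 \<le> x \<and> x < y \<and> y \<le> int n}"

definition left_part :: "step list \<Rightarrow> step list" where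
  "left_part w = takeWhile (\<lambda>s. s \<in> {StepS, StepE}) w"

definition right_part :: "step list \<Rightarrow> step list" where
  "right_part w = dropWhile (\<lambda>s. s \<in> {StepS, StepE}) w"

definition mixed_path :: "nat \<Rightarrow> int \<times> int \<Rightarrow> step list \<Rightarrow> bool" where
  "mixed_path n p w \<longleftrightarrow> set (verts p w) \<subseteq> grid n \<and>
     (\<exists>L R. w = L @ R \<and> set L \<subseteq> {StepS, StepE} \<and> set R \<subseteq> {StepF, StepN})"

text \<open>Vertices of the Left part and of the Right part (both contain the junction).\<close>
definition left_verts :: "int \<times> int \<Rightarrow> step list \<Rightarrow> (int \<times> int) set" where
  "left_verts p w = set (verts p (left_part w))"

definition right_verts :: "int \<times> int \<Rightarrow> step list \<Rightarrow> (int \<times> int) set" where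
  "right_verts p w = set (verts (last (verts p (left_part w))) (right_part w))"

text \<open>A configuration (omega_1,...,omega_n) is the list ws with omega_i = ws ! (i-1),
the path omega_i starting at (0,i).\<close>
definition mixed_config :: "nat \<Rightarrow> step list list \<Rightarrow> bool" where
  "mixed_config n ws \<longleftrightarrow> length ws = n \<and>
     (\<exists>\<sigma>. bij_betw \<sigma> {1..n} {1..n} \<and>
        (\<forall>i\<in>{1..n}. mixed_path n (0, int i) (ws ! (i - 1)) \<and>
            last (verts (0, int i) (ws ! (i - 1))) = (int (\<sigma> i) - 1, int (\<sigma> i)))) \<and>
     (\<forall>i\<in>{1..n}. \<forall>j\<in>{1..n}. i \<noteq> j \<longrightarrow>
        left_verts (0, int i) (ws ! (i - 1)) \<inter> left_verts (0, int j) (ws ! (j - 1)) = {}) \<and>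
     (\<forall>i\<in>{1..n}. \<forall>j\<in>{1..n}. i \<noteq> j \<longrightarrow>
        right_verts (0, int i) (ws ! (i - 1)) \<inter> right_verts (0, int j) (ws ! (j - 1)) = {})"

definition num_N :: "step list list \<Rightarrow> nat" where
  "num_N ws = (\<Sum>w\<leftarrow>ws. length (filter (\<lambda>s. s = StepN) w))"

definition MM :: "nat \<Rightarrow> nat \<Rightarrow> step list list set" where
  "MM n s = {ws. mixed_config n ws \<and> num_N ws = s}"

definition Phi :: "nat \<Rightarrow> mat \<times> int \<Rightarrow> step list list" where
  "Phi n NE = (case NE of (A, E) \<Rightarrow>
     (let k = kidx n A; b = cval n A; \<beta> = E + ell n A in
      map (\<lambda>i. let a = ainv n A i in
         if i = k - 1 then
           replicate (nat a) StepE @ replicate (nat \<beta>) StepF @ [StepN] @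
           replicate (nat (int k - 2 - a - \<beta>)) StepF
         else if i = k then
           replicate (nat a) StepE @ [StepS] @ replicate (nat b) StepE @
           replicate (nat (int k - 2 - a - b)) StepF
         else
           replicate (nat a) StepE @ replicate (nat (int i - 1 - a)) StepF)
       [1..<n+1]))"

end

theory Submission
  imports Defs
begin

definition kth_least :: "nat set \<Rightarrow> nat \<Rightarrow> nat" where
  "kth_least F m = sorted_list_of_set F ! m"

lemma kth_least_in: "finite F \<Longrightarrow> m < card F \<Longrightarrow> kth_least F m \<in> F"
  unfolding kth_least_def by (metis length_sorted_list_of_set nth_mem set_sorted_list_of_set)

lemma card_less_kth_least:
  assumes "finite F" "m < card F"
  shows "card {v \<in> F. v < kth_least F m} = m"
proof -
  let ?xs = "sorted_list_of_set F"
  have sorted: "sorted_wrt (<) ?xs" and len: "length ?xs = card F" by simp_all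
  have "{v \<in> F. v < ?xs ! m} = set (take m ?xs)"
  proof (intro equalityI subsetI)
    fix v assume v: "v \<in> {v \<in> F. v < ?xs ! m}"
    then obtain i where i: "i < length ?xs" "?xs ! i = v"
      using assms(1) by (metis in_set_conv_nth mem_Collect_eq set_sorted_list_of_set)
    have "i < m"
      using v i sorted assms(2) len by (metis mem_Collect_eq not_less_iff_gr_or_eq sorted_wrt_nth_less)
    then show "v \<in> set (take m ?xs)"
      using i by (metis in_set_conv_nth length_take min_less_iff_conj nth_take)
  next
    fix v assume "v \<in> set (take m ?xs)"
    then obtain i where "i < m" "?xs ! i = v"
      using assms len by (auto simp: in_set_conv_nth)
    then show "v \<in> {v \<in> F. v < ?xs ! m}"
      using sorted assms len by (metis (mono_tags) mem_Collect_eq nth_mem order.strict_trans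
          set_sorted_list_of_set sorted_wrt_nth_less)
  qed
  then show ?thesis
    using assms len by (simp add: kth_least_def distinct_card)
qed

lemma kth_least_card_less:
  assumes "finite F" "p \<in> F"
  shows "kth_least F (card {v \<in> F. v < p}) = p"
proof -
  obtain i where i: "i < card F" "kth_least F i = p"
    using assms by (metis in_set_conv_nth length_sorted_list_of_set set_sorted_list_of_set kth_least_def)
  then show ?thesis
    using card_less_kth_least[OF assms(1) i(1)] by simp
qed

lemma card_less_strict_mono:
  fixes x y :: nat
  assumes "finite V" "x \<in> V" "x < y"
  shows "card {v \<in> V. v < x} < card {v \<in> V. v < y}"
  using assms by (intro psubset_card_mono) auto

lemma card_filter_image:
  assumes "inj_on \<sigma> R"
  shows "card {r \<in> R. P (\<sigma> r)} = card {v \<in> \<sigma> ` R. P v}"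
proof -
  have "{v \<in> \<sigma> ` R. P v} = \<sigma> ` {r \<in> R. P (\<sigma> r)}" by auto
  moreover have "inj_on \<sigma> {r \<in> R. P (\<sigma> r)}"
    using assms by (rule inj_on_subset) auto
  ultimately show ?thesis by (simp add: card_image)
qed

lemma bij_betw_image_tail:
  fixes \<sigma> :: "nat \<Rightarrow> nat"
  assumes "bij_betw \<sigma> {1..n} {1..n}" "r \<in> {1..n}"
  shows "\<sigma> ` {r..n} = {1..n} - \<sigma> ` {1..<r}"
proof -
  have split: "{1..n} = {1..<r} \<union> {r..n}"
    using assms(2) by auto
  have inj: "inj_on \<sigma> ({1..<r} \<union> {r..n})"
    using assms(1) split by (simp add: bij_betw_def)
  have "\<sigma> ` {1..<r} \<inter> \<sigma> ` {r..n} = \<sigma> ` ({1..<r} \<inter> {r..n})"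
    using inj_on_image_Int[OF inj, of "{1..<r}" "{r..n}"] by auto
  then have "\<sigma> ` {1..<r} \<inter> \<sigma> ` {r..n} = {}"
    by auto
  moreover have "\<sigma> ` {1..<r} \<union> \<sigma> ` {r..n} = {1..n}"
    using assms(1) split by (simp add: bij_betw_def image_Un)
  ultimately show ?thesis
    by blast
qed

lemma bij_betw_of_inj_on_into:
  fixes \<sigma> :: "nat \<Rightarrow> nat"
  assumes "inj_on \<sigma> {1..n}" "\<sigma> ` {1..n} \<subseteq> {1..n}"
  shows "bij_betw \<sigma> {1..n} {1..n}"
  using assms by (metis bij_betw_def card_image card_subset_eq finite_atLeastAtMost)

section \<open>Lehmer codes\<close>

definition lehmer_code :: "nat \<Rightarrow> (nat \<Rightarrow> nat) \<Rightarrow> nat \<Rightarrow> nat" where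
  "lehmer_code n \<sigma> r = card {r' \<in> {r<..n}. \<sigma> r' < \<sigma> r}"

lemma lehmer_code_le: "lehmer_code n \<sigma> r \<le> n - r"
proof -
  have "lehmer_code n \<sigma> r \<le> card {r<..n}"
    unfolding lehmer_code_def by (rule card_mono) auto
  then show ?thesis by simp
qed

lemma lehmer_code_descent:
  fixes \<sigma> :: "nat \<Rightarrow> nat"
  assumes "\<sigma> (Suc r) < \<sigma> r" "Suc r \<le> n"
  shows "lehmer_code n \<sigma> (Suc r) < lehmer_code n \<sigma> r"
proof -
  have "insert (Suc r) {r' \<in> {Suc r<..n}. \<sigma> r' < \<sigma> (Suc r)} \<subseteq> {r' \<in> {r<..n}. \<sigma> r' < \<sigma> r}"
    using assms by (auto simp: Suc_le_eq)
  then have "card (insert (Suc r) {r' \<in> {Suc r<..n}. \<sigma> r' < \<sigma> (Suc r)}) \<le> lehmer_code n \<sigma> r"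
    unfolding lehmer_code_def by (intro card_mono) auto
  then show ?thesis
    unfolding lehmer_code_def by simp
qed

lemma lehmer_code_ascent:
  fixes \<sigma> :: "nat \<Rightarrow> nat"
  assumes "\<sigma> r < \<sigma> (Suc r)"
  shows "lehmer_code n \<sigma> r = card {r' \<in> {Suc r<..n}. \<sigma> r' < \<sigma> r}"
proof -
  have "{r' \<in> {r<..n}. \<sigma> r' < \<sigma> r} = {r' \<in> {Suc r<..n}. \<sigma> r' < \<sigma> r}"
    using assms by (auto simp: Suc_le_eq) (metis Suc_lessI less_asym)
  then show ?thesis
    unfolding lehmer_code_def by simp
qed

lemma lehmer_code_as_rank:
  fixes \<sigma> :: "nat \<Rightarrow> nat"
  assumes "inj_on \<sigma> {1..n}" "1 \<le> r"
  shows "lehmer_code n \<sigma> r = card {v \<in> \<sigma> ` {r..n}. v < \<sigma> r}"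
proof -
  have "{r' \<in> {r..n}. \<sigma> r' < \<sigma> r} = {r' \<in> {r<..n}. \<sigma> r' < \<sigma> r}"
    by (auto simp: le_less)
  moreover have "inj_on \<sigma> {r..n}"
    by (rule inj_on_subset[OF assms(1)]) (use assms(2) in auto)
  ultimately show ?thesis
    unfolding lehmer_code_def using card_filter_image[of \<sigma> "{r..n}" "\<lambda>v. v < \<sigma> r"] by simp
qed

lemma lehmer_code_inj:
  assumes \<sigma>: "bij_betw \<sigma> {1..n} {1..n}" and \<tau>: "bij_betw \<tau> {1..n} {1..n}"
    and code: "\<forall>r\<in>{1..n}. lehmer_code n \<sigma> r = lehmer_code n \<tau> r"
  shows "\<forall>r\<in>{1..n}. \<sigma> r = \<tau> r"
proof -
  have "r \<in> {1..n} \<longrightarrow> \<sigma> r = \<tau> r" for r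
  proof (induction r rule: less_induct)
    case (less r)
    show ?case
    proof
      assume r: "r \<in> {1..n}"
      have "\<sigma> ` {1..<r} = \<tau> ` {1..<r}"
        using less r by (intro image_cong) auto
      then have tail: "\<sigma> ` {r..n} = \<tau> ` {r..n}"
        using bij_betw_image_tail[OF \<sigma>] bij_betw_image_tail[OF \<tau>] r by auto
      have "\<sigma> r = kth_least (\<sigma> ` {r..n}) (lehmer_code n \<sigma> r)"
        using r \<sigma> by (simp add: lehmer_code_as_rank bij_betw_def kth_least_card_less)
      also have "\<dots> = kth_least (\<tau> ` {r..n}) (lehmer_code n \<tau> r)"
        using tail code r by simp
      also have "\<dots> = \<tau> r"
        using r \<tau> by (simp add: lehmer_code_as_rank bij_betw_def kth_least_card_less)
      finally show "\<sigma> r = \<tau> r" .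
    qed
  qed
  then show ?thesis by blast
qed

fun lehmer_decode :: "nat \<Rightarrow> (nat \<Rightarrow> nat) \<Rightarrow> nat \<Rightarrow> nat list" where
  "lehmer_decode n L 0 = []"
| "lehmer_decode n L (Suc r) =
     lehmer_decode n L r @ [kth_least ({1..n} - set (lehmer_decode n L r)) (L (Suc r))]"

lemma lehmer_decode_distinct:
  assumes "\<forall>r\<in>{1..n}. L r \<le> n - r" "r \<le> n"
  shows "distinct (lehmer_decode n L r) \<and> set (lehmer_decode n L r) \<subseteq> {1..n}"
  using assms(2)
proof (induction r)
  case (Suc r)
  let ?F = "{1..n} - set (lehmer_decode n L r)"
  have IH: "distinct (lehmer_decode n L r)" "set (lehmer_decode n L r) \<subseteq> {1..n}"
    using Suc by auto
  moreover have "length (lehmer_decode n L r) = r"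
    by (induction r) auto
  ultimately have "card ?F = n - r"
    by (simp add: card_Diff_subset distinct_card)
  moreover have "L (Suc r) \<le> n - Suc r"
    using assms(1) Suc.prems by auto
  ultimately have "kth_least ?F (L (Suc r)) \<in> ?F"
    using Suc.prems by (intro kth_least_in) auto
  then show ?case
    using IH by auto
qed simp

lemma lehmer_code_surj:
  assumes L: "\<forall>r\<in>{1..n}. L r \<le> n - r"
  obtains \<sigma> where "bij_betw \<sigma> {1..n} {1..n}" "\<forall>r\<in>{1..n}. lehmer_code n \<sigma> r = L r"
proof
  define \<sigma> where "\<sigma> r = last (lehmer_decode n L r)" for r
  have set_decode: "set (lehmer_decode n L r) = \<sigma> ` {1..r}" for r
    by (induction r) (auto simp: \<sigma>_def atLeastAtMostSuc_conv)
  have \<sigma>_Suc: "\<sigma> (Suc r) = kth_least ({1..n} - \<sigma> ` {1..r}) (L (Suc r))" for r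
    using set_decode[of r] by (simp add: \<sigma>_def)
  have fresh: "\<sigma> r \<in> {1..n} - \<sigma> ` {1..<r}" if r: "r \<in> {1..n}" for r
  proof -
    obtain r' where r': "r = Suc r'" using r by (cases r) auto
    have "distinct (lehmer_decode n L r) \<and> set (lehmer_decode n L r) \<subseteq> {1..n}"
      using lehmer_decode_distinct[OF L] r by simp
    then show ?thesis
      using r' set_decode[of r'] by (auto simp: \<sigma>_def atLeastLessThanSuc_atLeastAtMost)
  qed
  have inj: "inj_on \<sigma> {1..n}"
  proof (rule linorder_inj_onI')
    fix r r' assume "r \<in> {1..n}" "r' \<in> {1..n}" "r < r'"
    then have "\<sigma> r \<in> \<sigma> ` {1..<r'}" "\<sigma> r' \<notin> \<sigma> ` {1..<r'}"
      using fresh[of r'] by auto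
    then show "\<sigma> r \<noteq> \<sigma> r'"
      by metis
  qed
  show bij: "bij_betw \<sigma> {1..n} {1..n}"
    using inj fresh by (intro bij_betw_of_inj_on_into) auto
  show "\<forall>r\<in>{1..n}. lehmer_code n \<sigma> r = L r"
  proof
    fix r assume r: "r \<in> {1..n}"
    let ?F = "{1..n} - \<sigma> ` {1..<r}"
    obtain r' where r': "r = Suc r'" using r by (cases r) auto
    have "\<sigma> r = kth_least ?F (L r)"
      using \<sigma>_Suc[of r'] r' by (simp add: atLeastLessThanSuc_atLeastAtMost)
    moreover have "card ?F = n - (r - 1)"
    proof -
      have "inj_on \<sigma> {1..<r}"
        by (rule inj_on_subset[OF inj]) (use r in auto)
      moreover have "\<sigma> ` {1..<r} \<subseteq> {1..n}"
        using fresh r by fastforce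
      ultimately show ?thesis
        by (simp add: card_Diff_subset card_image)
    qed
    moreover have "L r \<le> n - r"
      using L r by blast
    ultimately have "card {v \<in> ?F. v < \<sigma> r} = L r"
      using r card_less_kth_least[of ?F "L r"] by (simp add: Suc_diff_le less_Suc_eq_le)
    moreover have "lehmer_code n \<sigma> r = card {v \<in> ?F. v < \<sigma> r}"
      using lehmer_code_as_rank[OF inj, of r] bij_betw_image_tail[OF bij r] r by simp
    ultimately show "lehmer_code n \<sigma> r = L r"
      by simp
  qed
qed

section \<open>Alternating lines\<close>

lemma nonzeros_map_upt:
  "filter (\<lambda>x. x \<noteq> 0) (map f [1..<n+1]) =
     map f (sorted_list_of_set {j \<in> {1..n}. f j \<noteq> (0::int)})"
proof -
  have "sorted_wrt (<) (filter (\<lambda>j. f j \<noteq> 0) [Suc 0..<Suc n])"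
    by (intro sorted_wrt_filter sorted_wrt_upt)
  moreover have "set (filter (\<lambda>j. f j \<noteq> 0) [Suc 0..<Suc n]) = {j \<in> {1..n}. f j \<noteq> 0}"
    by auto
  ultimately have "sorted_list_of_set {j \<in> {1..n}. f j \<noteq> 0} = filter (\<lambda>j. f j \<noteq> 0) [Suc 0..<Suc n]"
    by (metis sorted_list_of_set_unique distinct_card distinct_filter distinct_upt finite_set)
  then show ?thesis
    by (simp add: filter_map comp_def del: upt_Suc)
qed

lemma alternating_without_neg_one:
  assumes "alternating (map f L)" "\<forall>x\<in>set L. f x = (1::int)"
  obtains a where "L = [a]"
proof -
  have "length L = 1"
  proof (rule ccontr)
    assume "length L \<noteq> 1"
    moreover have "L \<noteq> []"
      using assms(1) by (auto simp: alternating_def)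
    ultimately have "Suc 0 < length L"
      by (cases L) auto
    then have "f (L ! 1) = - f (L ! 0)"
      using assms(1) unfolding alternating_def by fastforce
    moreover have "L ! 0 \<in> set L" "L ! 1 \<in> set L"
      using \<open>Suc 0 < length L\<close> by (auto intro!: nth_mem)
    ultimately show False
      using assms(2) by simp
  qed
  then show thesis
    using that by (auto simp: length_Suc_conv)
qed

lemma alternating_with_one_neg_one:
  fixes L :: "nat list"
  assumes alt: "alternating (map f L)" and sorted: "sorted_wrt (<) L"
    and neg: "\<forall>j\<in>set L. f j = -1 \<longleftrightarrow> j = j0" "j0 \<in> set L"
  obtains a c where "L = [a, j0, c]" "f a = (1::int)" "f c = 1"
proof -
  have step: "\<And>k. Suc k < length L \<Longrightarrow> f (L ! Suc k) = - f (L ! k)"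
    using alt unfolding alternating_def by fastforce
  have hd: "f (hd L) = 1" and last: "f (last L) = 1" and ne: "L \<noteq> []"
    using alt by (auto simp: alternating_def hd_map last_map)
  consider a where "L = [a]" | a b where "L = [a, b]" | a b c where "L = [a, b, c]"
    | a b c d r where "L = a # b # c # d # r"
    using ne by (metis list.exhaust)
  then show thesis
  proof cases
    case (1 a)
    then show ?thesis using neg hd by auto
  next
    case (2 a b)
    then show ?thesis using step[of 0] hd last by simp
  next
    case (3 a b c)
    then have "f b = -1" using step[of 0] hd by simp
    then show ?thesis using that 3 neg hd last by auto
  next
    case (4 a b c d r)
    then have "f b = -1" "f d = -1"
      using step[of 0] step[of 1] step[of 2] hd by simp_all
    then have "b = d"
      using neg 4 by auto
    then show ?thesis
      using sorted 4 by auto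
  qed
qed

lemma alternating_line_unit:
  assumes alt: "alternating (filter (\<lambda>x. x \<noteq> 0) (map f [1..<n+1]))"
    and vals: "\<forall>j. f j \<in> {-1, 0, 1}" and supp: "\<forall>j. f j \<noteq> 0 \<longrightarrow> j \<in> {1..n}"
    and no_neg: "\<forall>j. f j \<noteq> -1"
  obtains j where "j \<in> {1..n}" "f = (\<lambda>j'. of_bool (j' = j))"
proof -
  define S where "S = {j \<in> {1..n}. f j \<noteq> 0}"
  have set: "set (sorted_list_of_set S) = S"
    by (simp add: S_def)
  have ones: "\<forall>x\<in>S. f x = 1"
    using vals no_neg unfolding S_def by fastforce
  then obtain j where "sorted_list_of_set S = [j]"
    using alternating_without_neg_one[of f "sorted_list_of_set S"] alt set
    unfolding nonzeros_map_upt S_def by blast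
  then have "S = {j}"
    using set by simp
  have "f j' = of_bool (j' = j)" for j'
  proof (cases "j' \<in> S")
    case True
    then show ?thesis
      using ones \<open>S = {j}\<close> by simp
  next
    case False
    then show ?thesis
      using supp \<open>S = {j}\<close> unfolding S_def by auto
  qed
  moreover have "j \<in> {1..n}"
    using \<open>S = {j}\<close> unfolding S_def by blast
  ultimately show thesis
    using that by blast
qed

lemma alternating_line_triple:
  assumes alt: "alternating (filter (\<lambda>x. x \<noteq> 0) (map f [1..<n+1]))"
    and supp: "\<forall>j. f j \<noteq> 0 \<longrightarrow> j \<in> {1..n}" and neg: "\<forall>j. f j = -1 \<longleftrightarrow> j = j0"
  obtains j1 j3 where "j1 < j0" "j0 < j3" "j1 \<in> {1..n}" "j3 \<in> {1..n}"
    "f = (\<lambda>j. of_bool (j = j1) - of_bool (j = j0) + of_bool (j = j3))"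
proof -
  define S where "S = {j \<in> {1..n}. f j \<noteq> 0}"
  have set: "set (sorted_list_of_set S) = S"
    by (simp add: S_def)
  have "f j0 = -1"
    using neg by blast
  then have "j0 \<in> S"
    using supp unfolding S_def by auto
  then obtain a c where L: "sorted_list_of_set S = [a, j0, c]" "f a = 1" "f c = 1"
    using alternating_with_one_neg_one[of f "sorted_list_of_set S" j0] alt neg set
    unfolding nonzeros_map_upt S_def by auto
  have "sorted_wrt (<) (sorted_list_of_set S)"
    by (rule strict_sorted_list_of_set)
  then have "a < j0" "j0 < c"
    unfolding L by simp_all
  moreover have "S = {a, j0, c}"
    using set unfolding L(1) by simp
  moreover have "f = (\<lambda>j. of_bool (j = a) - of_bool (j = j0) + of_bool (j = c))"
  proof
    fix j
    show "f j = of_bool (j = a) - of_bool (j = j0) + of_bool (j = c)"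
    proof (cases "j \<in> S")
      case True
      then show ?thesis
        using \<open>S = {a, j0, c}\<close> \<open>a < j0\<close> \<open>j0 < c\<close> L(2,3) \<open>f j0 = -1\<close> by auto
    next
      case False
      then have "f j = 0"
        using supp unfolding S_def by auto
      then show ?thesis
        using False \<open>S = {a, j0, c}\<close> by auto
    qed
  qed
  ultimately show thesis
    using that \<open>S = {a, j0, c}\<close> unfolding S_def by blast
qed

lemma alternating_line_of_single:
  assumes "j \<in> {1..n}" "f j = 1" "\<forall>j'\<in>{1..n}. j' \<noteq> j \<longrightarrow> f j' = 0"
  shows "alternating (filter (\<lambda>x. x \<noteq> 0) (map f [1..<n+1]))"
proof -
  have "{j' \<in> {1..n}. f j' \<noteq> (0::int)} = {j}"
    using assms by auto
  then show ?thesis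
    unfolding nonzeros_map_upt by (simp add: alternating_def assms(2))
qed

lemma alternating_line_of_triple:
  assumes "j1 \<in> {1..n}" "j0 \<in> {1..n}" "j3 \<in> {1..n}" "j1 < j0" "j0 < j3"
    "f j1 = 1" "f j0 = -1" "f j3 = 1"
    "\<forall>j\<in>{1..n}. j \<noteq> j1 \<and> j \<noteq> j0 \<and> j \<noteq> j3 \<longrightarrow> f j = 0"
  shows "alternating (filter (\<lambda>x. x \<noteq> 0) (map f [1..<n+1]))"
proof -
  have "{j \<in> {1..n}. f j \<noteq> (0::int)} = {j1, j0, j3}"
    using assms by auto
  moreover have "sorted_list_of_set {j1, j0, j3} = [j1, j0, j3]"
    using assms(4,5) by (intro sorted_list_of_set_unique[THEN iffD1]) auto
  ultimately show ?thesis
    unfolding nonzeros_map_upt alternating_def using assms(6-8) by (auto simp: less_Suc_eq nth_Cons')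
qed

section \<open>Neutral matrices with a single -1\<close>

text \<open>The permutation matrix of \<sigma> plus the rank-one matrix (e_q - e_{q+1}) (e_c - e_{\<sigma> q})^T:
  the 1 of row q moves from column \<sigma> q to column c, and row q + 1 becomes 1, -1, 1 in the
  columns \<sigma> q < c < \<sigma> (q + 1).  Every element of A_{n,1} that is neutral has this form.\<close>
definition neutral_matrix :: "nat \<Rightarrow> (nat \<Rightarrow> nat) \<Rightarrow> nat \<Rightarrow> nat \<Rightarrow> mat" where
  "neutral_matrix n \<sigma> q c r j =
     of_bool (r \<in> {1..n} \<and> \<sigma> r = j) +
     (of_bool (r = q) - of_bool (r = Suc q)) * (of_bool (j = c) - of_bool (j = \<sigma> q))"

lemma sum_of_bool_eq: "finite A \<Longrightarrow> (\<Sum>x\<in>A. (of_bool (x = a) :: int)) = of_bool (a \<in> A)"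
  by (simp add: of_bool_def)

lemma sum_neutral_matrix:
  assumes "R \<subseteq> {1..n}" "finite J"
  shows "(\<Sum>r\<in>R. \<Sum>j\<in>J. neutral_matrix n \<sigma> q c r j) = int (card {r \<in> R. \<sigma> r \<in> J}) +
     (of_bool (q \<in> R) - of_bool (Suc q \<in> R)) * (of_bool (c \<in> J) - of_bool (\<sigma> q \<in> J))"
proof -
  let ?D = "\<lambda>r. of_bool (r = q) - of_bool (r = Suc q) :: int"
  let ?E = "\<lambda>j. of_bool (j = c) - of_bool (j = \<sigma> q) :: int"
  have "finite R"
    using assms(1) finite_subset by blast
  have "(\<Sum>r\<in>R. \<Sum>j\<in>J. neutral_matrix n \<sigma> q c r j) =
      (\<Sum>r\<in>R. \<Sum>j\<in>J. of_bool (r \<in> {1..n} \<and> \<sigma> r = j)) + (\<Sum>r\<in>R. ?D r) * (\<Sum>j\<in>J. ?E j)"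
    by (simp only: neutral_matrix_def sum.distrib sum_product)
  also have "(\<Sum>r\<in>R. \<Sum>j\<in>J. (of_bool (r \<in> {1..n} \<and> \<sigma> r = j) :: int)) = (\<Sum>r\<in>R. of_bool (\<sigma> r \<in> J))"
  proof (rule sum.cong[OF refl])
    fix r assume "r \<in> R"
    then have "(\<Sum>j\<in>J. (of_bool (r \<in> {1..n} \<and> \<sigma> r = j) :: int)) = (\<Sum>j\<in>J. of_bool (j = \<sigma> r))"
      using assms(1) by (intro sum.cong) auto
    then show "(\<Sum>j\<in>J. (of_bool (r \<in> {1..n} \<and> \<sigma> r = j) :: int)) = of_bool (\<sigma> r \<in> J)"
      using sum_of_bool_eq[OF assms(2)] by simp
  qed
  also have "(\<Sum>r\<in>R. (of_bool (\<sigma> r \<in> J) :: int)) = int (card {r \<in> R. \<sigma> r \<in> J})"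
    using \<open>finite R\<close> by (simp add: Int_def conj_commute)
  also have "(\<Sum>r\<in>R. ?D r) = of_bool (q \<in> R) - of_bool (Suc q \<in> R)"
    using \<open>finite R\<close> by (simp add: sum_subtractf sum_of_bool_eq)
  also have "(\<Sum>j\<in>J. ?E j) = of_bool (c \<in> J) - of_bool (\<sigma> q \<in> J)"
    using assms(2) by (simp add: sum_subtractf sum_of_bool_eq)
  finally show ?thesis .
qed

locale neutral_data =
  fixes n :: nat and \<sigma> :: "nat \<Rightarrow> nat" and q c :: nat
  assumes perm: "bij_betw \<sigma> {1..n} {1..n}"
    and q_pos: "1 \<le> q"
    and c_below: "c \<in> \<sigma> ` {Suc (Suc q)..n}"
    and leading_less: "\<sigma> q < c"
    and closing_greater: "c < \<sigma> (Suc q)"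
begin

lemma perm_in: "r \<in> {1..n} \<Longrightarrow> \<sigma> r \<in> {1..n}"
  using perm bij_betwE by blast

lemma perm_eq_iff: "r \<in> {1..n} \<Longrightarrow> r' \<in> {1..n} \<Longrightarrow> \<sigma> r = \<sigma> r' \<longleftrightarrow> r = r'"
  using perm by (meson bij_betw_def inj_on_eq_iff)

lemma perm_surj: "j \<in> {1..n} \<Longrightarrow> \<exists>r\<in>{1..n}. \<sigma> r = j"
  using perm by (metis bij_betw_imp_surj_on imageE)

lemma q_le: "Suc (Suc q) \<le> n"
  using c_below by (auto simp: image_iff)

lemma rows_in: "q \<in> {1..n}" "Suc q \<in> {1..n}"
  using q_pos q_le by auto

lemma c_in: "c \<in> {1..n}"
  using c_below perm_in q_pos by auto

lemma opening_row_entries: "neutral_matrix n \<sigma> q c q j = of_bool (j = c)"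
  using rows_in by (auto simp: neutral_matrix_def)

lemma closing_row_entries:
  "neutral_matrix n \<sigma> q c (Suc q) j =
     (if j = \<sigma> q \<or> j = \<sigma> (Suc q) then 1 else if j = c then -1 else 0)"
  using rows_in leading_less closing_greater by (auto simp: neutral_matrix_def)

lemma other_row_entries:
  "r \<noteq> q \<Longrightarrow> r \<noteq> Suc q \<Longrightarrow> neutral_matrix n \<sigma> q c r j = of_bool (r \<in> {1..n} \<and> \<sigma> r = j)"
  by (simp add: neutral_matrix_def)

lemma entry_neg_one_iff: "neutral_matrix n \<sigma> q c r j = -1 \<longleftrightarrow> r = Suc q \<and> j = c"
  using opening_row_entries[of j] closing_row_entries[of j] other_row_entries[of r j]
    leading_less closing_greater
  by (cases "r = q"; cases "r = Suc q") auto

lemma entry_zero_outside: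
  assumes "r \<notin> {1..n} \<or> j \<notin> {1..n}"
  shows "neutral_matrix n \<sigma> q c r j = 0"
proof (cases "r \<in> {1..n}")
  case True
  then have "j \<notin> {1..n}"
    using assms by blast
  then have "j \<noteq> c" "j \<noteq> \<sigma> q" "j \<noteq> \<sigma> (Suc q)" "j \<noteq> \<sigma> r"
    using c_in perm_in rows_in True by blast+
  then show ?thesis
    using opening_row_entries[of j] closing_row_entries[of j] other_row_entries[of r j]
    by (cases "r = q"; cases "r = Suc q") auto
next
  case False
  then show ?thesis
    using rows_in other_row_entries[of r j] by auto
qed

lemma entries: "neutral_matrix n \<sigma> q c r j \<in> {-1, 0, 1}"
  using opening_row_entries[of j] closing_row_entries[of j] other_row_entries[of r j]
  by (cases "r = q"; cases "r = Suc q") auto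

lemma rows_alternating:
  assumes "r \<in> {1..n}"
  shows "alternating (nz_row n (neutral_matrix n \<sigma> q c) r)"
  unfolding nz_row_def
proof -
  consider "r = q" | "r = Suc q" | "r \<noteq> q" "r \<noteq> Suc q" by blast
  then show "alternating (filter (\<lambda>x. x \<noteq> 0) (map (neutral_matrix n \<sigma> q c r) [1..<n+1]))"
  proof cases
    case 1
    then show ?thesis
      using c_in opening_row_entries by (intro alternating_line_of_single[of c]) auto
  next
    case 2
    then show ?thesis
      using c_in perm_in rows_in closing_row_entries leading_less closing_greater
      by (intro alternating_line_of_triple[of "\<sigma> q" n c "\<sigma> (Suc q)"]) auto
  next
    case 3
    then show ?thesis
      using assms perm_in other_row_entries by (intro alternating_line_of_single[of "\<sigma> r"]) auto
  qed
qed

lemma columns_alternating: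
  assumes j: "j \<in> {1..n}"
  shows "alternating (nz_col n (neutral_matrix n \<sigma> q c) j)"
  unfolding nz_col_def
proof -
  let ?M = "neutral_matrix n \<sigma> q c"
  obtain r where r: "r \<in> {1..n}" "\<sigma> r = j"
    using perm_surj[OF j] by blast
  have other: "?M i j = of_bool (i = r)" if "i \<noteq> q" "i \<noteq> Suc q" for i
  proof (cases "i \<in> {1..n}")
    case True
    then show ?thesis
      using other_row_entries[OF that, of j] perm_eq_iff[OF True r(1)] r(2) by simp
  next
    case False
    then show ?thesis
      using other_row_entries[OF that, of j] r(1) by auto
  qed
  consider "j = c" | "j \<noteq> c" "r = q \<or> r = Suc q" | "j \<noteq> c" "r \<noteq> q" "r \<noteq> Suc q"
    by blast
  then show "alternating (filter (\<lambda>x. x \<noteq> 0) (map (\<lambda>i. ?M i j) [1..<n+1]))"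
  proof cases
    case 1
    obtain r' where r': "r' \<in> {Suc (Suc q)..n}" "\<sigma> r' = c"
      using c_below by blast
    then have "r' = r"
      using perm_eq_iff[of r' r] r 1 q_pos by auto
    then have "q < Suc q" "Suc q < r" "r \<in> {1..n}" "?M r j = 1"
      using r' r other[of r] by auto
    moreover have "?M q j = 1" "?M (Suc q) j = -1"
      using 1 opening_row_entries entry_neg_one_iff by simp_all
    moreover have "\<forall>i\<in>{1..n}. i \<noteq> q \<and> i \<noteq> Suc q \<and> i \<noteq> r \<longrightarrow> ?M i j = 0"
      using other by simp
    ultimately show ?thesis
      using rows_in by (intro alternating_line_of_triple[of q n "Suc q" r]) auto
  next
    case 2
    have "?M i j = 0" if "i \<noteq> Suc q" for i
      using that 2 other opening_row_entries[of j] by (cases "i = q") auto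
    then show ?thesis
      using 2 r rows_in closing_row_entries[of j]
      by (intro alternating_line_of_single[of "Suc q"]) auto
  next
    case 3
    have "j \<noteq> \<sigma> q" "j \<noteq> \<sigma> (Suc q)"
      using 3 r perm_eq_iff[OF rows_in(1) r(1)] perm_eq_iff[OF rows_in(2) r(1)] by auto
    then have "?M i j = 0" if "i \<noteq> r" for i
      using that 3 other opening_row_entries[of j] closing_row_entries[of j]
      by (cases "i = q"; cases "i = Suc q") auto
    then show ?thesis
      using 3 r other
      by (intro alternating_line_of_single[of r]) auto
  qed
qed

lemma in_ASM1: "neutral_matrix n \<sigma> q c \<in> ASM1 n"
proof -
  have "is_ASM n (neutral_matrix n \<sigma> q c)"
    unfolding is_ASM_def using rows_alternating columns_alternating entries entry_zero_outside
    by blast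
  moreover have "{(i, j). i \<in> {1..n} \<and> j \<in> {1..n} \<and> neutral_matrix n \<sigma> q c i j = -1} = {(Suc q, c)}"
    using entry_neg_one_iff rows_in c_in by auto
  ultimately show ?thesis
    unfolding ASM1_def by simp
qed

lemma neg_one_position: "(THE p. neutral_matrix n \<sigma> q c (fst p) (snd p) = -1) = (Suc q, c)"
  by (rule the_equality) (auto simp: entry_neg_one_iff)

lemma closing_row: "closing_row (neutral_matrix n \<sigma> q c) = Suc q"
  unfolding closing_row_def neg_one_position by simp

lemma opening_col: "opening_col (neutral_matrix n \<sigma> q c) = c"
  unfolding opening_col_def neg_one_position by simp

lemma opening_row: "opening_row (neutral_matrix n \<sigma> q c) = q"
  unfolding opening_row_def closing_row opening_col
proof (rule the_equality)
  show "q < Suc q \<and> neutral_matrix n \<sigma> q c q c = 1"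
    by (simp add: opening_row_entries)
next
  fix i assume i: "i < Suc q \<and> neutral_matrix n \<sigma> q c i c = 1"
  obtain r where "r \<in> {Suc (Suc q)..n}" "\<sigma> r = c"
    using c_below by blast
  then show "i = q"
    using i other_row_entries[of i c] perm_eq_iff[of i r] by (auto split: if_splits)
qed

lemma neutral: "neutral (neutral_matrix n \<sigma> q c)"
  unfolding neutral_def closing_row opening_row by simp

lemma closing_col: "closing_col (neutral_matrix n \<sigma> q c) = \<sigma> (Suc q)"
  unfolding closing_col_def closing_row opening_col
proof (rule the_equality)
  fix j assume "c < j \<and> neutral_matrix n \<sigma> q c (Suc q) j = 1"
  then show "j = \<sigma> (Suc q)"
    using closing_row_entries[of j] leading_less by (auto split: if_splits)
qed (use closing_row_entries closing_greater in simp)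

lemma leading_row: "leading_row (neutral_matrix n \<sigma> q c) = Suc q"
  unfolding leading_row_def opening_row opening_col
proof (rule Least_equality)
  show "q < Suc q \<and> (\<exists>j<c. neutral_matrix n \<sigma> q c (Suc q) j = 1)"
    using closing_row_entries[of "\<sigma> q"] leading_less by auto
qed simp

lemma leading_col: "leading_col (neutral_matrix n \<sigma> q c) = \<sigma> q"
  unfolding leading_col_def opening_col leading_row
proof (rule the_equality)
  fix j assume "j < c \<and> neutral_matrix n \<sigma> q c (Suc q) j = 1"
  then show "j = \<sigma> q"
    using closing_row_entries[of j] closing_greater by (auto split: if_splits)
qed (use closing_row_entries leading_less in simp)

lemma kidx: "kidx n (neutral_matrix n \<sigma> q c) = n + 1 - q"
  unfolding kidx_def opening_row ..

lemma leftmost1: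
  assumes "r \<in> {1..n}"
  shows "leftmost1 (neutral_matrix n \<sigma> q c) r = (if r = q then c else if r = Suc q then \<sigma> q else \<sigma> r)"
proof -
  consider "r = q" | "r = Suc q" | "r \<noteq> q" "r \<noteq> Suc q" by blast
  then show ?thesis
  proof cases
    case 1
    then show ?thesis
      unfolding leftmost1_def using opening_row_entries by (intro Least_equality) auto
  next
    case 2
    have "neutral_matrix n \<sigma> q c (Suc q) j = 1 \<Longrightarrow> \<sigma> q \<le> j" for j
      using closing_row_entries[of j] leading_less closing_greater by (auto split: if_splits)
    then show ?thesis
      unfolding leftmost1_def using 2 closing_row_entries[of "\<sigma> q"] by (intro Least_equality) auto
  next
    case 3
    then show ?thesis
      unfolding leftmost1_def using assms other_row_entries by (intro Least_equality) auto
  qed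
qed

end

context neutral_data
begin

lemma sum_below_left_of:
  "(\<Sum>r'\<in>{r<..n}. \<Sum>j\<in>{1..<p}. neutral_matrix n \<sigma> q c r' j) =
     int (card {r' \<in> {r<..n}. \<sigma> r' < p}) +
     (of_bool (r < q) - of_bool (r < Suc q)) * (of_bool (c < p) - of_bool (\<sigma> q < p))"
proof -
  have "{r' \<in> {r<..n}. \<sigma> r' \<in> {1..<p}} = {r' \<in> {r<..n}. \<sigma> r' < p}"
    using perm_in by fastforce
  moreover have "c \<in> {1..<p} \<longleftrightarrow> c < p" "\<sigma> q \<in> {1..<p} \<longleftrightarrow> \<sigma> q < p"
    using c_in perm_in[OF rows_in(1)] by auto
  moreover have "q \<in> {r<..n} \<longleftrightarrow> r < q" "Suc q \<in> {r<..n} \<longleftrightarrow> r < Suc q"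
    using rows_in by auto
  ultimately show ?thesis
    using sum_neutral_matrix[of "{r<..n}" n "{1..<p}" \<sigma> q c] by force
qed

lemma card_rows_below_closing_row:
  assumes "\<not> P (\<sigma> (Suc q))"
  shows "card {r \<in> {q<..n}. P (\<sigma> r)} = card {r \<in> {Suc q<..n}. P (\<sigma> r)}"
proof -
  have "{r \<in> {q<..n}. P (\<sigma> r)} = {r \<in> {Suc q<..n}. P (\<sigma> r)}"
    using assms by (auto simp: Suc_le_eq) (metis Suc_lessI)
  then show ?thesis by simp
qed

lemma lehmer_code_opening_row: "lehmer_code n \<sigma> q = card {r \<in> {Suc q<..n}. \<sigma> r < \<sigma> q}"
  using lehmer_code_ascent leading_less closing_greater by simp

lemma ainv_other_row:
  assumes "i \<in> {1..n}" "n + 1 - i \<noteq> q" "n + 1 - i \<noteq> Suc q"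
  shows "ainv n (neutral_matrix n \<sigma> q c) i = int (lehmer_code n \<sigma> (n + 1 - i))"
proof -
  have "n + 1 - i \<in> {1..n}"
    using assms(1) by auto
  then have "leftmost1 (neutral_matrix n \<sigma> q c) (n + 1 - i) = \<sigma> (n + 1 - i)"
    using assms leftmost1 by simp
  moreover have "(of_bool (n + 1 - i < q) - of_bool (n + 1 - i < Suc q) :: int) = 0"
    using assms(2,3) by auto
  ultimately show ?thesis
    unfolding ainv_def sum_below_left_of by (simp add: lehmer_code_def)
qed

lemma ainv_closing_row: "ainv n (neutral_matrix n \<sigma> q c) (n - q) = int (lehmer_code n \<sigma> q)"
proof -
  have "n + 1 - (n - q) = Suc q"
    using q_le by simp
  then show ?thesis
    using rows_in unfolding ainv_def sum_below_left_of by (simp add: leftmost1 lehmer_code_opening_row)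
qed

lemma ainv_opening_row:
  "ainv n (neutral_matrix n \<sigma> q c) (n + 1 - q) = int (card {r \<in> {Suc q<..n}. \<sigma> r < c}) + 1"
proof -
  have "n + 1 - (n + 1 - q) = q"
    using q_le by simp
  then show ?thesis
    using rows_in leading_less closing_greater card_rows_below_closing_row[of "\<lambda>v. v < c"]
    unfolding ainv_def sum_below_left_of by (simp add: leftmost1)
qed

lemma ell: "ell n (neutral_matrix n \<sigma> q c) = int (card {r \<in> {Suc q<..n}. \<sigma> q < \<sigma> r \<and> \<sigma> r < c})"
proof -
  have "{r \<in> {q<..n}. \<sigma> r \<in> {\<sigma> q<..<c}} = {r \<in> {Suc q<..n}. \<sigma> q < \<sigma> r \<and> \<sigma> r < c}"
    using card_rows_below_closing_row closing_greater by (auto simp: Suc_le_eq) (metis Suc_lessI less_asym)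
  then show ?thesis
    unfolding ell_def opening_row leading_col opening_col
    using sum_neutral_matrix[of "{q<..n}" n "{\<sigma> q<..<c}" \<sigma> q c] by force
qed

lemma cval: "cval n (neutral_matrix n \<sigma> q c) = int (card {r \<in> {Suc q<..n}. c < \<sigma> r \<and> \<sigma> r < \<sigma> (Suc q)})"
proof -
  have "{r \<in> {Suc q<..n}. \<sigma> r \<in> {c<..<\<sigma> (Suc q)}} = {r \<in> {Suc q<..n}. c < \<sigma> r \<and> \<sigma> r < \<sigma> (Suc q)}"
    by auto
  then show ?thesis
    unfolding cval_def closing_row closing_col opening_col
    using sum_neutral_matrix[of "{Suc q<..n}" n "{c<..<\<sigma> (Suc q)}" \<sigma> q c] by force
qed

lemma card_below_opening_col:
  "int (card {r \<in> {Suc q<..n}. \<sigma> r < c}) = int (lehmer_code n \<sigma> q) + ell n (neutral_matrix n \<sigma> q c)"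
proof -
  let ?A = "{r \<in> {Suc q<..n}. \<sigma> r < \<sigma> q}"
  let ?B = "{r \<in> {Suc q<..n}. \<sigma> q < \<sigma> r \<and> \<sigma> r < c}"
  have "\<sigma> r \<noteq> \<sigma> q" if "r \<in> {Suc q<..n}" for r
  proof -
    have "r \<in> {1..n}" "r \<noteq> q"
      using that by auto
    then show ?thesis
      using perm_eq_iff rows_in(1) by metis
  qed
  then have "{r \<in> {Suc q<..n}. \<sigma> r < c} = ?A \<union> ?B"
    using leading_less by fastforce
  moreover have "card (?A \<union> ?B) = card ?A + card ?B"
    by (rule card_Un_disjoint) auto
  ultimately show ?thesis
    by (simp add: lehmer_code_opening_row ell)
qed

lemma lehmer_code_closing_row:
  "int (lehmer_code n \<sigma> (Suc q)) =
     int (card {r \<in> {Suc q<..n}. \<sigma> r < c}) + 1 + cval n (neutral_matrix n \<sigma> q c)"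
proof -
  obtain rc where rc: "rc \<in> {Suc (Suc q)..n}" "\<sigma> rc = c"
    using c_below by blast
  let ?A = "{r \<in> {Suc q<..n}. \<sigma> r < c}"
  let ?B = "{r \<in> {Suc q<..n}. c < \<sigma> r \<and> \<sigma> r < \<sigma> (Suc q)}"
  have "r = rc" if "r \<in> {Suc q<..n}" "\<sigma> r = c" for r
  proof -
    have "r \<in> {1..n}" "rc \<in> {1..n}"
      using that(1) rc(1) q_pos by auto
    then show ?thesis
      using perm_eq_iff that(2) rc(2) by metis
  qed
  then have "{r \<in> {Suc q<..n}. \<sigma> r < \<sigma> (Suc q)} \<subseteq> ?A \<union> insert rc ?B"
    by (auto simp: not_less_iff_gr_or_eq)
  moreover have "?A \<union> insert rc ?B \<subseteq> {r \<in> {Suc q<..n}. \<sigma> r < \<sigma> (Suc q)}"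
    using rc closing_greater by auto
  ultimately have "{r \<in> {Suc q<..n}. \<sigma> r < \<sigma> (Suc q)} = ?A \<union> insert rc ?B"
    by (rule antisym)
  moreover have "card (?A \<union> insert rc ?B) = card ?A + (1 + card ?B)"
    using rc by (subst card_Un_disjoint) auto
  ultimately show ?thesis
    by (simp add: lehmer_code_def cval)
qed

lemma opening_col_rank:
  "c = kth_least (\<sigma> ` {Suc q<..n}) (card {r \<in> {Suc q<..n}. \<sigma> r < c})"
proof -
  have "inj_on \<sigma> {Suc q<..n}"
    using perm by (rule bij_betw_imp_inj_on[THEN inj_on_subset]) auto
  moreover have "c \<in> \<sigma> ` {Suc q<..n}"
    using c_below by (auto simp: Suc_le_eq)
  ultimately show ?thesis
    using card_filter_image[of \<sigma> "{Suc q<..n}" "\<lambda>v. v < c"]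
      kth_least_card_less[of "\<sigma> ` {Suc q<..n}" c] by simp
qed

end

lemma neutral_matrix_cong:
  assumes "\<forall>r\<in>{1..n}. \<sigma> r = \<sigma>' r" "q \<in> {1..n}"
  shows "neutral_matrix n \<sigma> q c = neutral_matrix n \<sigma>' q c"
  using assms by (auto simp: neutral_matrix_def fun_eq_iff)

lemma ASM1_neg_one:
  assumes "A \<in> ASM1 n"
  obtains r0 c where "r0 \<in> {1..n}" "c \<in> {1..n}" "\<forall>i j. A i j = -1 \<longleftrightarrow> i = r0 \<and> j = c"
    "closing_row A = r0" "opening_col A = c"
proof -
  have supp: "\<forall>i j. A i j \<noteq> 0 \<longrightarrow> i \<in> {1..n} \<and> j \<in> {1..n}"
    using assms unfolding ASM1_def is_ASM_def by blast
  have "card {(i, j). i \<in> {1..n} \<and> j \<in> {1..n} \<and> A i j = -1} = 1"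
    using assms unfolding ASM1_def by simp
  then obtain p where p: "{(i, j). i \<in> {1..n} \<and> j \<in> {1..n} \<and> A i j = -1} = {p}"
    by (rule card_1_singletonE)
  obtain r0 c where rc: "p = (r0, c)"
    by (cases p)
  have "A i j = -1 \<longleftrightarrow> i = r0 \<and> j = c" for i j
  proof
    assume "A i j = -1"
    then have "(i, j) \<in> {(i, j). i \<in> {1..n} \<and> j \<in> {1..n} \<and> A i j = -1}"
      using supp[rule_format, of i j] by simp
    then show "i = r0 \<and> j = c"
      unfolding p rc by simp
  next
    assume "i = r0 \<and> j = c"
    moreover have "(r0, c) \<in> {(i, j). i \<in> {1..n} \<and> j \<in> {1..n} \<and> A i j = -1}"
      unfolding p rc by simp
    ultimately show "A i j = -1"
      by simp
  qed
  then have neg: "\<forall>i j. A i j = -1 \<longleftrightarrow> i = r0 \<and> j = c"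
    by blast
  then have "(THE p. A (fst p) (snd p) = -1) = (r0, c)"
    by (intro the_equality) auto
  moreover have "r0 \<in> {1..n}" "c \<in> {1..n}"
    using p unfolding rc by auto
  ultimately show thesis
    using that neg unfolding closing_row_def opening_col_def by simp
qed

lemma ASM_lines:
  assumes "is_ASM n A"
  shows "\<forall>i j. A i j \<noteq> 0 \<longrightarrow> i \<in> {1..n} \<and> j \<in> {1..n}" "\<forall>i j. A i j \<in> {-1, 0, 1}"
    "\<And>i. i \<in> {1..n} \<Longrightarrow> alternating (filter (\<lambda>x. x \<noteq> 0) (map (A i) [1..<n+1]))"
    "\<And>j. j \<in> {1..n} \<Longrightarrow> alternating (filter (\<lambda>x. x \<noteq> 0) (map (\<lambda>i. A i j) [1..<n+1]))"
  using assms unfolding is_ASM_def nz_row_def nz_col_def by blast+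

lemma neutral_ASM1_rows:
  assumes A1: "A \<in> ASM1 n" and neu: "neutral A"
  obtains q c j1 j3 g where "q \<in> {1..n}" "Suc q \<in> {1..n}" "c \<in> {1..n}"
    "j1 < c" "c < j3" "j1 \<in> {1..n}" "j3 \<in> {1..n}"
    "A (Suc q) = (\<lambda>j. of_bool (j = j1) - of_bool (j = c) + of_bool (j = j3))"
    "\<forall>r\<in>{1..n} - {Suc q}. g r \<in> {1..n} \<and> A r = (\<lambda>j. of_bool (j = g r))"
    "g q = c" "c \<in> g ` {Suc (Suc q)..n}" "\<forall>i j. A i j = -1 \<longleftrightarrow> i = Suc q \<and> j = c"
proof -
  have asm: "is_ASM n A"
    using A1 unfolding ASM1_def by blast
  note lines = ASM_lines[OF asm]
  obtain r0 c where r0: "r0 \<in> {1..n}" and c: "c \<in> {1..n}"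
    and neg: "\<forall>i j. A i j = -1 \<longleftrightarrow> i = r0 \<and> j = c"
    and cr: "closing_row A = r0" and oc: "opening_col A = c"
    using ASM1_neg_one[OF A1] by blast
  obtain q i2 where col_c: "q < r0" "r0 < i2" "q \<in> {1..n}" "i2 \<in> {1..n}"
    "(\<lambda>i. A i c) = (\<lambda>i. of_bool (i = q) - of_bool (i = r0) + of_bool (i = i2))"
    using alternating_line_triple[of "\<lambda>i. A i c" n r0] lines(1,4) c neg by blast
  have "opening_row A = q"
    unfolding opening_row_def cr oc
  proof (rule the_equality)
    show "q < r0 \<and> A q c = 1"
      using col_c by (simp add: fun_eq_iff)
  next
    fix i assume "i < r0 \<and> A i c = 1"
    then show "i = q"
      using fun_cong[OF col_c(5), of i] col_c(2) by (auto split: if_splits)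
  qed
  then have r0q: "r0 = Suc q"
    using neu cr unfolding neutral_def by simp
  obtain j1 j3 where row: "j1 < c" "c < j3" "j1 \<in> {1..n}" "j3 \<in> {1..n}"
    "A r0 = (\<lambda>j. of_bool (j = j1) - of_bool (j = c) + of_bool (j = j3))"
    using alternating_line_triple[of "A r0" n c] lines(1,3) r0 neg by blast
  have "\<exists>j\<in>{1..n}. A r = (\<lambda>j'. of_bool (j' = j))" if "r \<in> {1..n} - {r0}" for r
    using alternating_line_unit[of "A r" n] lines that neg by (metis DiffD1 DiffD2 singletonI)
  then obtain g where g: "\<forall>r\<in>{1..n} - {Suc q}. g r \<in> {1..n} \<and> A r = (\<lambda>j. of_bool (j = g r))"
    unfolding r0q by metis
  have "A q c = 1" "A i2 c = 1"
    using fun_cong[OF col_c(5), of q] fun_cong[OF col_c(5), of i2] col_c(1,2) by auto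
  moreover have "q \<in> {1..n} - {Suc q}" "i2 \<in> {1..n} - {Suc q}"
    using col_c r0q by auto
  ultimately have "of_bool (c = g q) = (1::int)" "of_bool (c = g i2) = (1::int)"
    using g by metis+
  then have gq: "g q = c" and gi2: "g i2 = c"
    by (simp_all split: if_splits)
  have "i2 \<in> {Suc (Suc q)..n}"
    using col_c r0q by auto
  then have "c \<in> g ` {Suc (Suc q)..n}"
    using gi2 by (metis imageI)
  moreover have "A (Suc q) = (\<lambda>j. of_bool (j = j1) - of_bool (j = c) + of_bool (j = j3))"
    using row(5) r0q by simp
  moreover have "Suc q \<in> {1..n}"
    using r0 r0q by simp
  ultimately show thesis
    using that[of q c j1 j3 g] col_c(3) c row(1-4) g gq neg r0q by blast
qed

lemma neutral_ASM1_decompose: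
  assumes A1: "A \<in> ASM1 n" and neu: "neutral A"
  obtains \<sigma> q c where "neutral_data n \<sigma> q c" "A = neutral_matrix n \<sigma> q c"
proof -
  obtain q c j1 j3 g where q: "q \<in> {1..n}" "Suc q \<in> {1..n}" and c: "c \<in> {1..n}"
    and row: "j1 < c" "c < j3" "j1 \<in> {1..n}" "j3 \<in> {1..n}"
      "A (Suc q) = (\<lambda>j. of_bool (j = j1) - of_bool (j = c) + of_bool (j = j3))"
    and g: "\<forall>r\<in>{1..n} - {Suc q}. g r \<in> {1..n} \<and> A r = (\<lambda>j. of_bool (j = g r))"
    and gq: "g q = c" and gc: "c \<in> g ` {Suc (Suc q)..n}"
    and neg: "\<forall>i j. A i j = -1 \<longleftrightarrow> i = Suc q \<and> j = c"
    by (rule neutral_ASM1_rows[OF A1 neu])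
  have lines: "\<forall>i j. A i j \<noteq> 0 \<longrightarrow> i \<in> {1..n} \<and> j \<in> {1..n}" "\<forall>i j. A i j \<in> {-1, 0, 1}"
    "\<And>j. j \<in> {1..n} \<Longrightarrow> alternating (filter (\<lambda>x. x \<noteq> 0) (map (\<lambda>i. A i j) [1..<n+1]))"
    using ASM_lines A1 unfolding ASM1_def by blast+
  have row_q: "A q = (\<lambda>j. of_bool (j = c))"
    using g q gq by auto
  define \<sigma> where "\<sigma> r = (if r = q then j1 else if r = Suc q then j3 else g r)" for r
  have onto: "j \<in> \<sigma> ` {1..n}" if j: "j \<in> {1..n}" for j
  proof (cases "j = c")
    case True
    then obtain r where "r \<in> {Suc (Suc q)..n}" "g r = j"
      using gc by auto
    then have "r \<in> {1..n}" "\<sigma> r = j"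
      using q by (auto simp: \<sigma>_def)
    then show ?thesis
      by (metis imageI)
  next
    case False
    then obtain i where i: "i \<in> {1..n}" "(\<lambda>i. A i j) = (\<lambda>i'. of_bool (i' = i))"
      using alternating_line_unit[of "\<lambda>i. A i j" n] lines j neg by metis
    then have Aij: "A i j = 1"
      by (metis (full_types) of_bool_eq(2))
    consider "i = q" | "i = Suc q" | "i \<noteq> q" "i \<noteq> Suc q"
      by blast
    then show ?thesis
    proof cases
      case 1
      then show ?thesis
        using Aij row_q False by simp
    next
      case 2
      then have "j = j1 \<or> j = j3"
        using Aij row(5) False by (auto split: if_splits)
      then show ?thesis
        using q row(1,2) by (auto simp: \<sigma>_def)
    next
      case 3
      then have "g i = j"
        using Aij g i(1) by (auto split: if_splits)
      then show ?thesis
        using 3 i(1) by (metis \<sigma>_def imageI)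
    qed
  qed
  have "\<sigma> ` {1..n} \<subseteq> {1..n}"
    using g q row by (auto simp: \<sigma>_def)
  then have "\<sigma> ` {1..n} = {1..n}"
    using onto by blast
  then have perm: "bij_betw \<sigma> {1..n} {1..n}"
    by (simp add: bij_betw_def eq_card_imp_inj_on)
  have data: "neutral_data n \<sigma> q c"
  proof
    obtain r where "r \<in> {Suc (Suc q)..n}" "g r = c"
      using gc by auto
    then show "c \<in> \<sigma> ` {Suc (Suc q)..n}"
      by (auto simp: \<sigma>_def)
  qed (use perm q row in \<open>auto simp: \<sigma>_def\<close>)
  then interpret neutral_data n \<sigma> q c .
  have "A r j = neutral_matrix n \<sigma> q c r j" for r j
  proof -
    consider "r = q" | "r = Suc q" | "r \<notin> {1..n}" | "r \<in> {1..n}" "r \<noteq> q" "r \<noteq> Suc q"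
      by blast
    then show ?thesis
    proof cases
      case 1
      then show ?thesis
        using row_q opening_row_entries by simp
    next
      case 2
      then show ?thesis
        using row closing_row_entries[of j] by (simp add: \<sigma>_def)
    next
      case 3
      then show ?thesis
        using lines(1) entry_zero_outside by metis
    next
      case 4
      then show ?thesis
        using g other_row_entries[of r j] by (auto simp: \<sigma>_def)
    qed
  qed
  then show thesis
    using that data by blast
qed

section \<open>Generalized inversion tables\<close>

definition inversion_table :: "nat \<Rightarrow> mat \<times> int \<Rightarrow> nat \<times> (nat \<Rightarrow> int) \<times> int \<times> int" where
  "inversion_table n =
     (\<lambda>(A, E). (kidx n A, \<lambda>i. if i \<in> {1..n} then ainv n A i else 0, cval n A, E + ell n A))"

definition inversion_tables :: "nat \<Rightarrow> (nat \<times> (nat \<Rightarrow> int) \<times> int \<times> int) set" where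
  "inversion_tables n = {(k, a, b, \<beta>). 2 \<le> k \<and> k \<le> n \<and> (\<forall>i. i \<notin> {1..n} \<longrightarrow> a i = 0) \<and>
     (\<forall>i\<in>{1..n}. i \<noteq> k - 1 \<and> i \<noteq> k \<longrightarrow> 0 \<le> a i \<and> a i \<le> int i - 1) \<and>
     0 \<le> a (k - 1) \<and> a (k - 1) < a k \<and> 0 \<le> b \<and> a k + b \<le> int k - 2 \<and>
     0 \<le> \<beta> \<and> a (k - 1) + \<beta> < a k + b}"

context neutral_data
begin

lemma lehmer_code_from_table:
  assumes "r \<in> {1..n}"
  shows "int (lehmer_code n \<sigma> r) =
    (let M = neutral_matrix n \<sigma> q c in
       if r = q then ainv n M (n - q)
       else if r = Suc q then ainv n M (n + 1 - q) + cval n M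
       else ainv n M (n + 1 - r))"
proof -
  have "n + 1 - (n + 1 - r) = r" "n + 1 - r \<in> {1..n}"
    using assms by auto
  then show ?thesis
    using ainv_closing_row ainv_opening_row lehmer_code_closing_row ainv_other_row[of "n + 1 - r"]
    by (simp add: Let_def)
qed

lemma opening_col_from_table:
  "c = kth_least (\<sigma> ` {Suc q<..n}) (nat (ainv n (neutral_matrix n \<sigma> q c) (n + 1 - q) - 1))"
  using opening_col_rank ainv_opening_row by simp

lemma inversion_table_in:
  assumes "- ell n (neutral_matrix n \<sigma> q c) \<le> E" "E \<le> cval n (neutral_matrix n \<sigma> q c)"
  shows "inversion_table n (neutral_matrix n \<sigma> q c, E) \<in> inversion_tables n"
proof -
  let ?M = "neutral_matrix n \<sigma> q c"
  let ?k = "n + 1 - q"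
  have k: "?k - 1 = n - q" "2 \<le> ?k" "?k \<le> n" "int ?k - 2 = int (n - Suc q)"
    using q_pos q_le by auto
  have ell: "0 \<le> ell n ?M" and cval: "0 \<le> cval n ?M"
    by (simp_all add: ell cval)
  have a_opening: "ainv n ?M ?k = int (lehmer_code n \<sigma> q) + ell n ?M + 1"
    using ainv_opening_row card_below_opening_col by simp
  have code_closing: "int (lehmer_code n \<sigma> (Suc q)) = ainv n ?M ?k + cval n ?M"
    using ainv_opening_row lehmer_code_closing_row by simp
  have "int (lehmer_code n \<sigma> (Suc q)) \<le> int (n - Suc q)"
    using lehmer_code_le by simp
  moreover have "0 \<le> ainv n ?M i \<and> ainv n ?M i \<le> int i - 1"
    if "i \<in> {1..n}" "i \<noteq> ?k - 1" "i \<noteq> ?k" for i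
  proof -
    have "n + 1 - i \<noteq> q" "n + 1 - i \<noteq> Suc q"
      using that q_le by auto
    then show ?thesis
      using that ainv_other_row lehmer_code_le[of n \<sigma> "n + 1 - i"] by auto
  qed
  moreover have "inversion_table n (?M, E) =
      (?k, \<lambda>i. if i \<in> {1..n} then ainv n ?M i else 0, cval n ?M, E + ell n ?M)"
    by (simp add: inversion_table_def kidx)
  ultimately show ?thesis
    using assms k ell cval a_opening code_closing ainv_closing_row
    unfolding inversion_tables_def by auto
qed

end

lemma NN1_decompose:
  assumes "(A, E) \<in> NN1 n"
  obtains \<sigma> q c where "neutral_data n \<sigma> q c" "A = neutral_matrix n \<sigma> q c"
    "- ell n A \<le> E" "E \<le> cval n A"
  using assms neutral_ASM1_decompose unfolding NN1_def by blast

lemma inversion_table_NN1: "x \<in> NN1 n \<Longrightarrow> inversion_table n x \<in> inversion_tables n"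
  by (cases x) (metis NN1_decompose neutral_data.inversion_table_in)

lemma inj_on_inversion_table: "inj_on (inversion_table n) (NN1 n)"
proof (rule inj_onI, clarify)
  fix A E A' E'
  assume "(A, E) \<in> NN1 n" "(A', E') \<in> NN1 n" and eq: "inversion_table n (A, E) = inversion_table n (A', E')"
  then obtain \<sigma> q c \<sigma>' q' c' where D: "neutral_data n \<sigma> q c" and A: "A = neutral_matrix n \<sigma> q c"
    and D': "neutral_data n \<sigma>' q' c'" and A': "A' = neutral_matrix n \<sigma>' q' c'"
    by (metis NN1_decompose)
  have k: "kidx n A = kidx n A'" and b: "cval n A = cval n A'" and \<beta>: "E + ell n A = E' + ell n A'"
    and a: "\<forall>i\<in>{1..n}. ainv n A i = ainv n A' i"
    using eq unfolding inversion_table_def by (auto simp: fun_eq_iff) metis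
  have "q = q'"
    using k neutral_data.kidx[OF D] neutral_data.kidx[OF D'] neutral_data.q_le[OF D]
      neutral_data.q_le[OF D'] unfolding A A' by simp
  then have D': "neutral_data n \<sigma>' q c'" and A': "A' = neutral_matrix n \<sigma>' q c'"
    using D' A' by simp_all
  have "n - q \<in> {1..n}" "n + 1 - q \<in> {1..n}" "\<forall>r\<in>{1..n}. n + 1 - r \<in> {1..n}"
    using neutral_data.q_le[OF D] neutral_data.q_pos[OF D] by auto
  then have "\<forall>r\<in>{1..n}. lehmer_code n \<sigma> r = lehmer_code n \<sigma>' r"
    using neutral_data.lehmer_code_from_table[OF D] neutral_data.lehmer_code_from_table[OF D'] a b
    unfolding A A' Let_def by (metis of_nat_eq_iff)
  then have \<sigma>: "\<forall>r\<in>{1..n}. \<sigma> r = \<sigma>' r"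
    using lehmer_code_inj neutral_data.perm[OF D] neutral_data.perm[OF D'] by blast
  then have "\<sigma> ` {Suc q<..n} = \<sigma>' ` {Suc q<..n}"
    by (intro image_cong) auto
  then have "c = c'"
    using neutral_data.opening_col_from_table[OF D] neutral_data.opening_col_from_table[OF D']
      a \<open>n + 1 - q \<in> {1..n}\<close> unfolding A A' by metis
  then have "A = A'"
    using A A' \<sigma> neutral_matrix_cong neutral_data.rows_in(1)[OF D] by metis
  then show "A = A' \<and> E = E'"
    using \<beta> by simp
qed

lemma neutral_data_from_table:
  assumes "(k, a, b, \<beta>) \<in> inversion_tables n"
  defines "q \<equiv> n + 1 - k"
  obtains \<sigma> c where "neutral_data n \<sigma> q c"
    "\<forall>r\<in>{1..n} - {q, Suc q}. int (lehmer_code n \<sigma> r) = a (n + 1 - r)"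
    "int (lehmer_code n \<sigma> q) = a (k - 1)" "int (lehmer_code n \<sigma> (Suc q)) = a k + b"
    "int (card {r \<in> {Suc q<..n}. \<sigma> r < c}) = a k - 1"
proof -
  have t: "2 \<le> k" "k \<le> n" "\<forall>i\<in>{1..n}. i \<noteq> k - 1 \<and> i \<noteq> k \<longrightarrow> 0 \<le> a i \<and> a i \<le> int i - 1"
    "0 \<le> a (k - 1)" "a (k - 1) < a k" "0 \<le> b" "a k + b \<le> int k - 2"
    using assms(1) unfolding inversion_tables_def by auto
  have q: "1 \<le> q" "Suc (Suc q) \<le> n" "k = n + 1 - q" "k - 1 = n - q"
    using t unfolding q_def by auto
  define L where "L r = nat (if r = q then a (k - 1) else if r = Suc q then a k + b else a (n + 1 - r))"
    for r
  have "L r \<le> n - r" if r: "r \<in> {1..n}" for r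
  proof -
    have int_diff: "int (n - r) = int n - int r" "int k = int n + 1 - int q"
      using r q by auto
    consider "r = q" | "r = Suc q" | "r \<noteq> q" "r \<noteq> Suc q"
      by blast
    then show ?thesis
    proof cases
      case 3
      then have "n + 1 - r \<in> {1..n}" "n + 1 - r \<noteq> k - 1" "n + 1 - r \<noteq> k"
        using r q by auto
      then have "a (n + 1 - r) \<le> int (n + 1 - r) - 1"
        using t(3) by blast
      then show ?thesis
        using 3 r int_diff unfolding L_def by (simp add: nat_le_iff)
    qed (use t int_diff in \<open>auto simp: L_def nat_le_iff\<close>)
  qed
  then obtain \<sigma> where perm: "bij_betw \<sigma> {1..n} {1..n}" and code: "\<forall>r\<in>{1..n}. lehmer_code n \<sigma> r = L r"
    using lehmer_code_surj by blast
  have code_q: "int (lehmer_code n \<sigma> q) = a (k - 1)" and code_Sq: "int (lehmer_code n \<sigma> (Suc q)) = a k + b"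
    using code q t unfolding L_def by auto
  have "\<sigma> q \<noteq> \<sigma> (Suc q)"
    using perm q by (metis atLeastAtMost_iff bij_betw_iff_bijections le_SucI n_not_Suc_n Suc_leD)
  then have ascent: "\<sigma> q < \<sigma> (Suc q)"
    using lehmer_code_descent[of \<sigma> q n] code_q code_Sq t q by linarith
  let ?V = "\<sigma> ` {Suc q<..n}"
  have inj: "inj_on \<sigma> {q..n}"
    using perm q by (auto intro: inj_on_subset simp: bij_betw_def)
  have "{Suc q<..n} \<subseteq> {q..n}"
    by auto
  then have "inj_on \<sigma> {Suc q<..n}"
    by (rule inj_on_subset[OF inj])
  then have card_V: "card ?V = n - Suc q"
    by (simp add: card_image)
  have notin: "\<sigma> q \<notin> ?V" "\<sigma> (Suc q) \<notin> ?V"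
    using inj_on_image_mem_iff[OF inj _ \<open>{Suc q<..n} \<subseteq> {q..n}\<close>, of q]
      inj_on_image_mem_iff[OF inj _ \<open>{Suc q<..n} \<subseteq> {q..n}\<close>, of "Suc q"] q by auto
  have rank: "card {r \<in> {Suc q<..n}. \<sigma> r < v} = card {x \<in> ?V. x < v}" for v
    using inj by (intro card_filter_image inj_on_subset[OF inj]) auto
  define m where "m = nat (a k - 1)"
  have m1: "int m = a k - 1"
    using t unfolding m_def by auto
  have "int (card ?V) = int n - int q - 1" "int k = int n + 1 - int q"
    using card_V q by auto
  then have "int m < int (card ?V)"
    using m1 t by linarith
  then have m: "int m = a k - 1" "m < card ?V"
    using m1 by simp_all
  define c where "c = kth_least ?V m"
  have c: "c \<in> ?V" "card {x \<in> ?V. x < c} = m"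
    using kth_least_in card_less_kth_least m(2) unfolding c_def by auto
  have rank_q: "int (card {x \<in> ?V. x < \<sigma> q}) = a (k - 1)"
    and rank_Sq: "int (card {x \<in> ?V. x < \<sigma> (Suc q)}) = a k + b"
    using code_q code_Sq rank lehmer_code_ascent[OF ascent] unfolding lehmer_code_def by simp_all
  have "\<sigma> q < c"
  proof (rule ccontr)
    assume "\<not> \<sigma> q < c"
    then have "c < \<sigma> q"
      using c(1) notin(1) by (metis linorder_neqE_nat)
    then show False
      using card_less_strict_mono[of ?V c "\<sigma> q"] c rank_q m(1) t by simp
  qed
  moreover have "c < \<sigma> (Suc q)"
  proof (rule ccontr)
    assume "\<not> c < \<sigma> (Suc q)"
    then have "\<sigma> (Suc q) < c"
      using c(1) notin(2) by (metis linorder_neqE_nat)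
    then have "card {x \<in> ?V. x < \<sigma> (Suc q)} \<le> card {x \<in> ?V. x < c}"
      by (intro card_mono) auto
    then show False
      using c rank_Sq m(1) t by simp
  qed
  moreover have "{Suc q<..n} = {Suc (Suc q)..n}"
    by auto
  ultimately have "neutral_data n \<sigma> q c"
    using perm q c(1) by unfold_locales auto
  moreover have "\<forall>r\<in>{1..n} - {q, Suc q}. int (lehmer_code n \<sigma> r) = a (n + 1 - r)"
  proof
    fix r assume r: "r \<in> {1..n} - {q, Suc q}"
    then have "n + 1 - r \<in> {1..n}" "n + 1 - r \<noteq> k - 1" "n + 1 - r \<noteq> k"
      using q by auto
    then show "int (lehmer_code n \<sigma> r) = a (n + 1 - r)"
      using r code t unfolding L_def by auto
  qed
  moreover have "int (card {r \<in> {Suc q<..n}. \<sigma> r < c}) = a k - 1"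
    using rank c(2) m(1) by simp
  ultimately show thesis
    using that code_q code_Sq by blast
qed

lemma inversion_tables_subset: "inversion_tables n \<subseteq> inversion_table n ` NN1 n"
proof (clarify)
  fix k a b \<beta> assume t: "(k, a, b, \<beta>) \<in> inversion_tables n"
  define q where "q = n + 1 - k"
  obtain \<sigma> c where D: "neutral_data n \<sigma> q c"
    and code: "\<forall>r\<in>{1..n} - {q, Suc q}. int (lehmer_code n \<sigma> r) = a (n + 1 - r)"
    and code_q: "int (lehmer_code n \<sigma> q) = a (k - 1)" and code_Sq: "int (lehmer_code n \<sigma> (Suc q)) = a k + b"
    and rank: "int (card {r \<in> {Suc q<..n}. \<sigma> r < c}) = a k - 1"
    using neutral_data_from_table[OF t] unfolding q_def by blast
  interpret neutral_data n \<sigma> q c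
    by (rule D)
  let ?M = "neutral_matrix n \<sigma> q c"
  have t': "2 \<le> k" "k \<le> n" "\<forall>i. i \<notin> {1..n} \<longrightarrow> a i = 0" "0 \<le> \<beta>" "a (k - 1) + \<beta> < a k + b"
    using t unfolding inversion_tables_def by auto
  then have k: "k = n + 1 - q" "k - 1 = n - q"
    unfolding q_def by auto
  have ell: "ell n ?M = a k - 1 - a (k - 1)"
    using card_below_opening_col rank code_q by simp
  have cval: "cval n ?M = b"
    using lehmer_code_closing_row rank code_Sq by simp
  have "ainv n ?M i = a i" if i: "i \<in> {1..n}" for i
  proof -
    consider "i = k - 1" | "i = k" | "n + 1 - i \<in> {1..n} - {q, Suc q}"
      using i k by fastforce
    then show ?thesis
    proof cases
      case 3
      then show ?thesis
        using code ainv_other_row[OF i] i by force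
    qed (use k ainv_closing_row code_q ainv_opening_row rank in simp_all)
  qed
  then have "(\<lambda>i. if i \<in> {1..n} then ainv n ?M i else 0) = a"
    using t'(3) by auto
  then have "inversion_table n (?M, \<beta> - ell n ?M) = (k, a, b, \<beta>)"
    unfolding inversion_table_def using kidx k cval by simp
  moreover have "(?M, \<beta> - ell n ?M) \<in> NN1 n"
    unfolding NN1_def using in_ASM1 neutral ell cval t' by auto
  ultimately show "(k, a, b, \<beta>) \<in> inversion_table n ` NN1 n"
    by (metis image_eqI)
qed

theorem bij_betw_inversion_table: "bij_betw (inversion_table n) (NN1 n) (inversion_tables n)"
  unfolding bij_betw_def
  using inj_on_inversion_table inversion_table_NN1 inversion_tables_subset by blast

section \<open>Lattice paths\<close>

definition endpoint :: "int \<times> int \<Rightarrow> step list \<Rightarrow> int \<times> int" where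
  "endpoint p w = last (verts p w)"

abbreviation count_step :: "step \<Rightarrow> step list \<Rightarrow> nat" where
  "count_step X w \<equiv> length (filter (\<lambda>s. s = X) w)"

lemma verts_not_Nil [simp]: "verts p w \<noteq> []"
  by (induction w arbitrary: p) auto

lemma start_in_verts: "p \<in> set (verts p w)"
  by (cases w) auto

lemma endpoint_Nil [simp]: "endpoint p [] = p"
  unfolding endpoint_def by simp

lemma endpoint_Cons [simp]: "endpoint p (s # w) = endpoint (fst p + fst (disp s), snd p + snd (disp s)) w"
  unfolding endpoint_def by simp

lemma set_verts_append: "set (verts p (u @ w)) = set (verts p u) \<union> set (verts (endpoint p u) w)"
  by (induction u arbitrary: p) (auto simp: start_in_verts)

lemma endpoint_append: "endpoint p (u @ w) = endpoint (endpoint p u) w"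
  by (induction u arbitrary: p) auto

lemma endpoint_in_verts: "endpoint p w \<in> set (verts p w)"
  unfolding endpoint_def by simp

lemma endpoint_eq:
  "endpoint (x, y) w = (x + int (count_step StepE w + count_step StepF w + count_step StepN w),
     y - int (count_step StepS w) + int (count_step StepN w))"
proof (induction w arbitrary: x y)
  case (Cons s w)
  then show ?case
    by (cases s) auto
qed simp

definition hseg :: "int \<Rightarrow> int \<Rightarrow> int \<Rightarrow> (int \<times> int) set" where
  "hseg y x0 x1 = {(x, y'). y' = y \<and> x0 \<le> x \<and> x \<le> x1}"

lemma mem_hseg [simp]: "(x, y') \<in> hseg y x0 x1 \<longleftrightarrow> y' = y \<and> x0 \<le> x \<and> x \<le> x1"
  unfolding hseg_def by simp

lemma hseg_subset_grid: "0 \<le> x0 \<Longrightarrow> x1 < y \<Longrightarrow> y \<le> int n \<Longrightarrow> hseg y x0 x1 \<subseteq> grid n"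
  unfolding grid_def by auto

lemma verts_horizontal:
  assumes "X = StepE \<or> X = StepF"
  shows "set (verts (x, y) (replicate m X)) = hseg y x (x + int m)"
    "endpoint (x, y) (replicate m X) = (x + int m, y)"
proof -
  show "set (verts (x, y) (replicate m X)) = hseg y x (x + int m)"
    using assms
  proof (induction m arbitrary: x)
    case (Suc m)
    have "set (verts (x, y) (replicate (Suc m) X)) = insert (x, y) (set (verts (x + 1, y) (replicate m X)))"
      using Suc.prems by auto
    also have "\<dots> = insert (x, y) (hseg y (x + 1) (x + 1 + int m))"
      using Suc by simp
    also have "\<dots> = hseg y x (x + int (Suc m))"
      unfolding hseg_def by auto
    finally show ?case .
  qed (auto simp: hseg_def)
  show "endpoint (x, y) (replicate m X) = (x + int m, y)"
    using assms by (induction m arbitrary: x) auto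
qed

lemma left_right_part_append:
  assumes "set L \<subseteq> {StepS, StepE}" "set R \<subseteq> {StepF, StepN}"
  shows "left_part (L @ R) = L" "right_part (L @ R) = R"
proof -
  have "takeWhile (\<lambda>s. s \<in> {StepS, StepE}) R = []" "dropWhile (\<lambda>s. s \<in> {StepS, StepE}) R = R"
    using assms(2) by (cases R; auto)+
  then show "left_part (L @ R) = L" "right_part (L @ R) = R"
    using assms(1) unfolding left_part_def right_part_def
    by (simp_all add: subset_iff)
qed

lemma left_right_verts_append:
  assumes "set L \<subseteq> {StepS, StepE}" "set R \<subseteq> {StepF, StepN}"
  shows "left_verts p (L @ R) = set (verts p L)" "right_verts p (L @ R) = set (verts (endpoint p L) R)"
  unfolding left_verts_def right_verts_def left_right_part_append[OF assms] endpoint_def by simp_all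

abbreviation E_run :: "int \<Rightarrow> step list" where
  "E_run m \<equiv> replicate (nat m) StepE"

abbreviation F_run :: "int \<Rightarrow> step list" where
  "F_run m \<equiv> replicate (nat m) StepF"

lemma verts_E_run: "0 \<le> m \<Longrightarrow> set (verts (x, y) (E_run m)) = hseg y x (x + m)"
  and endpoint_E_run: "0 \<le> m \<Longrightarrow> endpoint (x, y) (E_run m) = (x + m, y)"
  and verts_F_run: "0 \<le> m \<Longrightarrow> set (verts (x, y) (F_run m)) = hseg y x (x + m)"
  and endpoint_F_run: "0 \<le> m \<Longrightarrow> endpoint (x, y) (F_run m) = (x + m, y)"
  using verts_horizontal[of StepE x y "nat m"] verts_horizontal[of StepF x y "nat m"] by simp_all

lemma path_flat:
  assumes "0 \<le> a" "0 \<le> r"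
  defines "w \<equiv> E_run a @ F_run r"
  shows "left_verts (0, y) w = hseg y 0 a" "right_verts (0, y) w = hseg y a (a + r)"
    "set (verts (0, y) w) = hseg y 0 (a + r)" "endpoint (0, y) w = (a + r, y)"
    "count_step StepN w = 0" "\<exists>L R. w = L @ R \<and> set L \<subseteq> {StepS, StepE} \<and> set R \<subseteq> {StepF, StepN}"
proof -
  have LR: "set (E_run a) \<subseteq> {StepS, StepE}" "set (F_run r) \<subseteq> {StepF, StepN}"
    by auto
  show "left_verts (0, y) w = hseg y 0 a" "right_verts (0, y) w = hseg y a (a + r)"
    unfolding w_def left_right_verts_append[OF LR] using assms
    by (simp_all add: verts_E_run endpoint_E_run verts_F_run)
  show "set (verts (0, y) w) = hseg y 0 (a + r)"
    unfolding w_def set_verts_append using assms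
    by (auto simp: verts_E_run endpoint_E_run verts_F_run)
  show "endpoint (0, y) w = (a + r, y)"
    unfolding w_def endpoint_append using assms by (simp add: endpoint_E_run endpoint_F_run)
  show "count_step StepN w = 0"
    unfolding w_def by auto
  show "\<exists>L R. w = L @ R \<and> set L \<subseteq> {StepS, StepE} \<and> set R \<subseteq> {StepF, StepN}"
    unfolding w_def using LR by blast
qed

lemma path_up:
  assumes "0 \<le> a" "0 \<le> \<beta>" "0 \<le> g"
  defines "w \<equiv> E_run a @ F_run \<beta> @ [StepN] @ F_run g"
  shows "left_verts (0, y) w = hseg y 0 a"
    "right_verts (0, y) w = hseg y a (a + \<beta>) \<union> hseg (y + 1) (a + \<beta> + 1) (a + \<beta> + 1 + g)"
    "set (verts (0, y) w) = hseg y 0 (a + \<beta>) \<union> hseg (y + 1) (a + \<beta> + 1) (a + \<beta> + 1 + g)"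
    "endpoint (0, y) w = (a + \<beta> + 1 + g, y + 1)" "count_step StepN w = 1"
    "\<exists>L R. w = L @ R \<and> set L \<subseteq> {StepS, StepE} \<and> set R \<subseteq> {StepF, StepN}"
proof -
  have LR: "set (E_run a) \<subseteq> {StepS, StepE}" "set (F_run \<beta> @ [StepN] @ F_run g) \<subseteq> {StepF, StepN}"
    by auto
  have right: "set (verts (a, y) (F_run \<beta> @ [StepN] @ F_run g)) =
      hseg y a (a + \<beta>) \<union> hseg (y + 1) (a + \<beta> + 1) (a + \<beta> + 1 + g)"
    unfolding set_verts_append endpoint_append using assms
    by (auto simp: verts_F_run endpoint_F_run)
  show "left_verts (0, y) w = hseg y 0 a"
    unfolding w_def left_right_verts_append[OF LR] using assms by (simp add: verts_E_run)
  show "right_verts (0, y) w = hseg y a (a + \<beta>) \<union> hseg (y + 1) (a + \<beta> + 1) (a + \<beta> + 1 + g)"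
    unfolding w_def left_right_verts_append[OF LR] using assms right by (simp add: endpoint_E_run)
  show "set (verts (0, y) w) = hseg y 0 (a + \<beta>) \<union> hseg (y + 1) (a + \<beta> + 1) (a + \<beta> + 1 + g)"
    unfolding w_def set_verts_append[of _ "E_run a"] using assms right
    by (auto simp: verts_E_run endpoint_E_run)
  show "endpoint (0, y) w = (a + \<beta> + 1 + g, y + 1)"
    unfolding w_def endpoint_append using assms by (simp add: endpoint_E_run endpoint_F_run)
  show "count_step StepN w = 1"
    unfolding w_def by auto
  show "\<exists>L R. w = L @ R \<and> set L \<subseteq> {StepS, StepE} \<and> set R \<subseteq> {StepF, StepN}"
    unfolding w_def using LR by blast
qed

lemma path_down:
  assumes "0 \<le> a" "0 \<le> b" "0 \<le> d"
  defines "w \<equiv> E_run a @ [StepS] @ E_run b @ F_run d"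
  shows "left_verts (0, y) w = hseg y 0 a \<union> hseg (y - 1) a (a + b)"
    "right_verts (0, y) w = hseg (y - 1) (a + b) (a + b + d)"
    "set (verts (0, y) w) = hseg y 0 a \<union> hseg (y - 1) a (a + b + d)"
    "endpoint (0, y) w = (a + b + d, y - 1)" "count_step StepN w = 0"
    "\<exists>L R. w = L @ R \<and> set L \<subseteq> {StepS, StepE} \<and> set R \<subseteq> {StepF, StepN}"
proof -
  have LR: "set (E_run a @ [StepS] @ E_run b) \<subseteq> {StepS, StepE}" "set (F_run d) \<subseteq> {StepF, StepN}"
    by auto
  have w: "w = (E_run a @ [StepS] @ E_run b) @ F_run d"
    unfolding w_def by simp
  have left: "set (verts (0, y) (E_run a @ [StepS] @ E_run b)) = hseg y 0 a \<union> hseg (y - 1) a (a + b)"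
    unfolding set_verts_append endpoint_append using assms
    by (auto simp: verts_E_run endpoint_E_run)
  have junction: "endpoint (0, y) (E_run a @ [StepS] @ E_run b) = (a + b, y - 1)"
    unfolding endpoint_append using assms by (simp add: endpoint_E_run)
  show "left_verts (0, y) w = hseg y 0 a \<union> hseg (y - 1) a (a + b)"
    "right_verts (0, y) w = hseg (y - 1) (a + b) (a + b + d)"
    unfolding w left_right_verts_append[OF LR] left junction using assms by (simp_all add: verts_F_run)
  show "set (verts (0, y) w) = hseg y 0 a \<union> hseg (y - 1) a (a + b + d)"
    unfolding w set_verts_append[of _ "E_run a @ [StepS] @ E_run b"] left junction using assms
    by (auto simp: verts_F_run)
  show "endpoint (0, y) w = (a + b + d, y - 1)"
    unfolding w endpoint_append[of _ "E_run a @ [StepS] @ E_run b"] junction using assms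
    by (simp add: endpoint_F_run)
  show "count_step StepN w = 0"
    unfolding w_def by auto
  show "\<exists>L R. w = L @ R \<and> set L \<subseteq> {StepS, StepE} \<and> set R \<subseteq> {StepF, StepN}"
    using w LR by (intro exI[of _ "E_run a @ [StepS] @ E_run b"] exI[of _ "F_run d"]) simp
qed

definition leading :: "step \<Rightarrow> step list \<Rightarrow> nat" where
  "leading X w = length (takeWhile (\<lambda>s. s = X) w)"

lemma leading_Nil [simp]: "leading X [] = 0"
  and leading_Cons [simp]: "leading X (Y # w) = (if Y = X then Suc (leading X w) else 0)"
  by (simp_all add: leading_def)

lemma leading_replicate [simp]: "leading X (replicate m X @ w) = m + leading X w"
  by (induction m) auto

lemma leading_replicate_other:
  "Y \<noteq> X \<Longrightarrow> leading X (replicate m Y @ w) = (if m = 0 then leading X w else 0)"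
  "Y \<noteq> X \<Longrightarrow> leading X (replicate m Y) = 0"
  by (cases m; auto)+

lemma dropWhile_replicate_other:
  "Y \<noteq> X \<Longrightarrow> dropWhile (\<lambda>s. s = X) (replicate m X @ replicate m' Y @ w) =
     (if m' = 0 then dropWhile (\<lambda>s. s = X) w else replicate m' Y @ w)"
  by (induction m) (cases m'; auto)+

section \<open>The configuration of an inversion table\<close>

definition table_path :: "nat \<Rightarrow> (nat \<Rightarrow> int) \<Rightarrow> int \<Rightarrow> int \<Rightarrow> nat \<Rightarrow> step list" where
  "table_path k a b \<beta> i =
     (if i = k - 1 then E_run (a i) @ F_run \<beta> @ [StepN] @ F_run (int k - 2 - a i - \<beta>)
      else if i = k then E_run (a i) @ [StepS] @ E_run b @ F_run (int k - 2 - a i - b)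
      else E_run (a i) @ F_run (int i - 1 - a i))"

definition table_config :: "nat \<Rightarrow> nat \<times> (nat \<Rightarrow> int) \<times> int \<times> int \<Rightarrow> step list list" where
  "table_config n = (\<lambda>(k, a, b, \<beta>). map (table_path k a b \<beta>) [1..<n+1])"

lemma Phi_eq_table_config: "Phi n = table_config n \<circ> inversion_table n"
proof
  fix x :: "mat \<times> int"
  obtain A E where "x = (A, E)"
    by (cases x)
  then show "Phi n x = (table_config n \<circ> inversion_table n) x"
    unfolding Phi_def table_config_def inversion_table_def table_path_def Let_def
    by (auto intro!: map_cong)
qed

lemma table_config_nth:
  "i \<in> {1..n} \<Longrightarrow> table_config n (k, a, b, \<beta>) ! (i - 1) = table_path k a b \<beta> i"
  unfolding table_config_def by (auto simp del: upt_Suc)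

lemma length_table_config [simp]: "length (table_config n t) = n"
  by (cases t) (simp add: table_config_def)

context
  fixes n k :: nat and a :: "nat \<Rightarrow> int" and b \<beta> :: int
  assumes table: "(k, a, b, \<beta>) \<in> inversion_tables n"
begin

lemma table_bounds:
  "2 \<le> k" "k \<le> n" "\<forall>i\<in>{1..n}. i \<noteq> k - 1 \<and> i \<noteq> k \<longrightarrow> 0 \<le> a i \<and> a i \<le> int i - 1"
  "0 \<le> a (k - 1)" "a (k - 1) < a k" "0 \<le> b" "a k + b \<le> int k - 2" "0 \<le> \<beta>"
  "a (k - 1) + \<beta> < a k + b"
  using table unfolding inversion_tables_def by auto

definition table_left_verts :: "nat \<Rightarrow> (int \<times> int) set" where
  "table_left_verts i =
     (if i = k then hseg (int k) 0 (a k) \<union> hseg (int k - 1) (a k) (a k + b)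
      else hseg (int i) 0 (a i))"

definition table_right_verts :: "nat \<Rightarrow> (int \<times> int) set" where
  "table_right_verts i =
     (if i = k - 1 then hseg (int k - 1) (a (k - 1)) (a (k - 1) + \<beta>) \<union> hseg (int k) (a (k - 1) + \<beta> + 1) (int k - 1)
      else if i = k then hseg (int k - 1) (a k + b) (int k - 2)
      else hseg (int i) (a i) (int i - 1))"

lemma table_path_props:
  assumes i: "i \<in> {1..n}"
  defines "w \<equiv> table_path k a b \<beta> i" and "\<tau> \<equiv> id (k - 1 := k, k := k - 1)"
  shows "left_verts (0, int i) w = table_left_verts i"
    "right_verts (0, int i) w = table_right_verts i"
    "mixed_path n (0, int i) w"
    "endpoint (0, int i) w = (int (\<tau> i) - 1, int (\<tau> i))"
    "count_step StepN w = of_bool (i = k - 1)"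
proof -
  note t = table_bounds
  consider "i = k - 1" | "i = k" | "i \<noteq> k - 1" "i \<noteq> k"
    by blast
  then have "left_verts (0, int i) w = table_left_verts i \<and> right_verts (0, int i) w = table_right_verts i \<and>
    mixed_path n (0, int i) w \<and> endpoint (0, int i) w = (int (\<tau> i) - 1, int (\<tau> i)) \<and>
    count_step StepN w = of_bool (i = k - 1)"
  proof cases
    case 1
    have "0 \<le> int k - 2 - a (k - 1) - \<beta>" "int i = int k - 1" "k - 1 \<noteq> k"
      using t 1 by auto
    note P = path_up[OF t(4) t(8) this(1)]
    show ?thesis
      unfolding w_def table_path_def table_left_verts_def table_right_verts_def mixed_path_def \<tau>_def
      using 1 P t \<open>int i = int k - 1\<close> \<open>k - 1 \<noteq> k\<close>
      by (simp add: hseg_subset_grid)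
  next
    case 2
    have "0 \<le> int k - 2 - a k - b" "0 \<le> a k" "k \<noteq> k - 1"
      using t by auto
    note P = path_down[OF this(2) t(6) this(1)]
    show ?thesis
      unfolding w_def table_path_def table_left_verts_def table_right_verts_def mixed_path_def \<tau>_def
      using 2 P t \<open>k \<noteq> k - 1\<close>
      by (simp add: hseg_subset_grid)
  next
    case 3
    have "0 \<le> a i" "a i \<le> int i - 1" "0 \<le> int i - 1 - a i"
      using t(3) i 3 by auto
    note P = path_flat[OF this(1,3)]
    show ?thesis
      unfolding w_def table_path_def table_left_verts_def table_right_verts_def mixed_path_def \<tau>_def
      using 3 P i \<open>a i \<le> int i - 1\<close>
      by (simp add: hseg_subset_grid)
  qed
  then show "left_verts (0, int i) w = table_left_verts i"
    "right_verts (0, int i) w = table_right_verts i"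
    "mixed_path n (0, int i) w"
    "endpoint (0, int i) w = (int (\<tau> i) - 1, int (\<tau> i))"
    "count_step StepN w = of_bool (i = k - 1)"
    by blast+
qed

lemma table_verts_disjoint:
  assumes "i \<in> {1..n}" "j \<in> {1..n}" "i \<noteq> j"
  shows "table_left_verts i \<inter> table_left_verts j = {}" "table_right_verts i \<inter> table_right_verts j = {}"
proof -
  note t = table_bounds
  have ij: "int i \<noteq> int j" "i = k - 1 \<longleftrightarrow> int i = int k - 1" "j = k - 1 \<longleftrightarrow> int j = int k - 1"
    using assms t by auto
  show "table_left_verts i \<inter> table_left_verts j = {}"
    using t(5) ij unfolding table_left_verts_def by (auto split: if_splits)
  show "table_right_verts i \<inter> table_right_verts j = {}"
    using t(9) ij unfolding table_right_verts_def by (auto split: if_splits)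
qed

lemma table_config_in_MM: "table_config n (k, a, b, \<beta>) \<in> MM n 1"
proof -
  let ?ws = "table_config n (k, a, b, \<beta>)"
  let ?\<tau> = "id (k - 1 := k, k := k - 1)"
  have \<tau>: "bij_betw ?\<tau> {1..n} {1..n}"
    using table_bounds(1,2) by (intro bij_betw_byWitness[where f' = ?\<tau>]) auto
  have nth: "\<forall>i\<in>{1..n}. ?ws ! (i - 1) = table_path k a b \<beta> i"
    using table_config_nth by blast
  have "mixed_config n ?ws"
    unfolding mixed_config_def
  proof (intro conjI exI[of _ ?\<tau>])
    show "\<forall>i\<in>{1..n}. mixed_path n (0, int i) (?ws ! (i - 1)) \<and>
        last (verts (0, int i) (?ws ! (i - 1))) = (int (?\<tau> i) - 1, int (?\<tau> i))"
      using nth table_path_props(3,4) unfolding endpoint_def by (simp del: fun_upd_apply)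
    show "\<forall>i\<in>{1..n}. \<forall>j\<in>{1..n}. i \<noteq> j \<longrightarrow>
        left_verts (0, int i) (?ws ! (i - 1)) \<inter> left_verts (0, int j) (?ws ! (j - 1)) = {}"
      using nth table_path_props(1) table_verts_disjoint(1) by simp
    show "\<forall>i\<in>{1..n}. \<forall>j\<in>{1..n}. i \<noteq> j \<longrightarrow>
        right_verts (0, int i) (?ws ! (i - 1)) \<inter> right_verts (0, int j) (?ws ! (j - 1)) = {}"
      using nth table_path_props(2) table_verts_disjoint(2) by simp
  qed (use \<tau> in simp_all)
  moreover have "num_N ?ws = 1"
  proof -
    have "num_N ?ws = (\<Sum>i\<in>{1..n}. count_step StepN (table_path k a b \<beta> i))"
      unfolding num_N_def table_config_def
      by (simp add: interv_sum_list_conv_sum_set_nat atLeastLessThanSuc_atLeastAtMost del: upt_Suc)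
    also have "\<dots> = (\<Sum>i\<in>{1..n}. of_bool (i = k - 1))"
      using table_path_props(5) by simp
    also have "\<dots> = 1"
    proof -
      have "k - 1 \<in> {1..n}"
        using table_bounds(1,2) by auto
      then show ?thesis
        by (simp add: of_bool_def)
    qed
    finally show ?thesis .
  qed
  ultimately show ?thesis
    unfolding MM_def by simp
qed

lemma S_in_table_path: "i \<in> {1..n} \<Longrightarrow> StepS \<in> set (table_path k a b \<beta> i) \<longleftrightarrow> i = k"
  unfolding table_path_def using table_bounds by auto

lemma leading_E_table_path: "i \<in> {1..n} \<Longrightarrow> int (leading StepE (table_path k a b \<beta> i)) = a i"
  unfolding table_path_def using table_bounds by (auto simp: leading_replicate_other)

lemma count_E_table_path: "int (count_step StepE (table_path k a b \<beta> k)) - a k = b"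
  unfolding table_path_def using table_bounds by auto

lemma leading_F_table_path:
  "int (leading StepF (dropWhile (\<lambda>s. s = StepE) (table_path k a b \<beta> (k - 1)))) = \<beta>"
  unfolding table_path_def using table_bounds by (auto simp: leading_replicate_other dropWhile_replicate_other)

end

lemma inj_on_table_config: "inj_on (table_config n) (inversion_tables n)"
proof (rule inj_onI)
  fix t t' assume "t \<in> inversion_tables n" "t' \<in> inversion_tables n" "table_config n t = table_config n t'"
  moreover obtain k a b \<beta> k' a' b' \<beta>' where "t = (k, a, b, \<beta>)" "t' = (k', a', b', \<beta>')"
    by (cases t, cases t')
  ultimately have T: "(k, a, b, \<beta>) \<in> inversion_tables n" and T': "(k', a', b', \<beta>') \<in> inversion_tables n"
    and eq: "table_config n (k, a, b, \<beta>) = table_config n (k', a', b', \<beta>')"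
    by simp_all
  have path: "table_path k a b \<beta> i = table_path k' a' b' \<beta>' i" if "i \<in> {1..n}" for i
    using eq table_config_nth[OF that] by metis
  have k: "k \<in> {1..n}" "k - 1 \<in> {1..n}"
    using table_bounds[OF T] by auto
  then have "k = k'"
    using path S_in_table_path[OF T] S_in_table_path[OF T'] by metis
  moreover have "a = a'"
  proof
    fix i
    show "a i = a' i"
    proof (cases "i \<in> {1..n}")
      case True
      then show ?thesis
        using path leading_E_table_path[OF T] leading_E_table_path[OF T'] by metis
    next
      case False
      then show ?thesis
        using T T' unfolding inversion_tables_def by auto
    qed
  qed
  moreover have "b = b'"
    using path[OF k(1)] count_E_table_path[OF T] count_E_table_path[OF T'] \<open>k = k'\<close> \<open>a = a'\<close>
    by metis
  moreover have "\<beta> = \<beta>'"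
    using path[OF k(2)] leading_F_table_path[OF T] leading_F_table_path[OF T'] \<open>k = k'\<close> by metis
  ultimately show "t = t'"
    using \<open>t = (k, a, b, \<beta>)\<close> \<open>t' = (k', a', b', \<beta>')\<close> by simp
qed

lemma replicate_of_count_zero:
  assumes "set L \<subseteq> {X, Y}" "count_step Y L = 0"
  shows "L = replicate (length L) X"
proof -
  have "\<forall>y\<in>set L. y \<noteq> Y"
    using assms(2) by (simp add: filter_empty_conv)
  then have "\<forall>y\<in>set L. y = X"
    using assms(1) by blast
  then show ?thesis
    by (rule replicate_length_same[symmetric])
qed

lemma replicate_of_count_one:
  assumes "set L \<subseteq> {X, Y}" "count_step Y L = 1"
  obtains p u where "L = replicate p X @ [Y] @ replicate u X"
proof -
  have "Y \<in> set L"
  proof (rule ccontr)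
    assume "Y \<notin> set L"
    then have "filter (\<lambda>s. s = Y) L = []"
      unfolding filter_empty_conv by blast
    then show False
      using assms(2) by simp
  qed
  then obtain xs ys where L: "L = xs @ Y # ys" "Y \<notin> set xs"
    by (meson split_list_first)
  then have "filter (\<lambda>s. s = Y) xs = []"
    unfolding filter_empty_conv by blast
  then have "count_step Y xs = 0" "count_step Y ys = 0"
    using assms(2) L(1) by simp_all
  then have "xs = replicate (length xs) X" "ys = replicate (length ys) X"
    using assms(1) L(1) replicate_of_count_zero[of xs X Y] replicate_of_count_zero[of ys X Y] by auto
  then show thesis
    using that L(1) by (metis append_Cons append_Nil)
qed

lemma sum_nat_eq_1:
  assumes "finite A" "(\<Sum>x\<in>A. f x) = (1::nat)"
  obtains x0 where "x0 \<in> A" "f x0 = 1" "\<forall>x\<in>A. x \<noteq> x0 \<longrightarrow> f x = 0"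
proof -
  obtain x0 where x0: "x0 \<in> A" "f x0 \<noteq> 0"
    using assms(2) by (metis sum.neutral zero_neq_one)
  have "(\<Sum>x\<in>A. f x) = f x0 + (\<Sum>x\<in>A - {x0}. f x)"
    using assms(1) x0(1) by (simp add: sum.remove)
  then have "f x0 = 1" "(\<Sum>x\<in>A - {x0}. f x) = 0"
    using assms(2) x0(2) by linarith+
  then show thesis
    using that x0 assms(1) by auto
qed

locale config_one_N =
  fixes n :: nat and ws :: "step list list"
  assumes in_MM: "ws \<in> MM n 1"
begin

abbreviation \<omega> :: "nat \<Rightarrow> step list" where
  "\<omega> i \<equiv> ws ! (i - 1)"

lemma length_ws: "length ws = n"
  using in_MM unfolding MM_def mixed_config_def by auto

lemma left_verts_disjoint:
  "i \<in> {1..n} \<Longrightarrow> j \<in> {1..n} \<Longrightarrow> i \<noteq> j \<Longrightarrow> left_verts (0, int i) (\<omega> i) \<inter> left_verts (0, int j) (\<omega> j) = {}"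
  and right_verts_disjoint:
  "i \<in> {1..n} \<Longrightarrow> j \<in> {1..n} \<Longrightarrow> i \<noteq> j \<Longrightarrow> right_verts (0, int i) (\<omega> i) \<inter> right_verts (0, int j) (\<omega> j) = {}"
  using in_MM unfolding MM_def mixed_config_def by blast+

definition target :: "nat \<Rightarrow> nat" where
  "target = (SOME \<sigma>. bij_betw \<sigma> {1..n} {1..n} \<and>
     (\<forall>i\<in>{1..n}. mixed_path n (0, int i) (\<omega> i) \<and>
        last (verts (0, int i) (\<omega> i)) = (int (\<sigma> i) - 1, int (\<sigma> i))))"

lemma target:
  "bij_betw target {1..n} {1..n}"
  "i \<in> {1..n} \<Longrightarrow> mixed_path n (0, int i) (\<omega> i)"
  "i \<in> {1..n} \<Longrightarrow> endpoint (0, int i) (\<omega> i) = (int (target i) - 1, int (target i))"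
proof -
  have "\<exists>\<sigma>. bij_betw \<sigma> {1..n} {1..n} \<and>
     (\<forall>i\<in>{1..n}. mixed_path n (0, int i) (\<omega> i) \<and>
        last (verts (0, int i) (\<omega> i)) = (int (\<sigma> i) - 1, int (\<sigma> i)))"
    using in_MM unfolding MM_def mixed_config_def by blast
  from someI_ex[OF this] show "bij_betw target {1..n} {1..n}"
    "i \<in> {1..n} \<Longrightarrow> mixed_path n (0, int i) (\<omega> i)"
    "i \<in> {1..n} \<Longrightarrow> endpoint (0, int i) (\<omega> i) = (int (target i) - 1, int (target i))"
    unfolding target_def endpoint_def by blast+
qed

abbreviation Lp :: "nat \<Rightarrow> step list" where
  "Lp i \<equiv> left_part (\<omega> i)"

abbreviation Rp :: "nat \<Rightarrow> step list" where
  "Rp i \<equiv> right_part (\<omega> i)"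

lemma left_right_parts:
  assumes "i \<in> {1..n}"
  shows "\<omega> i = Lp i @ Rp i" "set (Lp i) \<subseteq> {StepS, StepE}" "set (Rp i) \<subseteq> {StepF, StepN}"
proof -
  obtain L R where LR: "\<omega> i = L @ R" "set L \<subseteq> {StepS, StepE}" "set R \<subseteq> {StepF, StepN}"
    using target(2)[OF assms] unfolding mixed_path_def by blast
  then show "\<omega> i = Lp i @ Rp i" "set (Lp i) \<subseteq> {StepS, StepE}" "set (Rp i) \<subseteq> {StepF, StepN}"
    using left_right_part_append[OF LR(2,3)] by simp_all
qed

lemma left_verts_eq: "left_verts (0, int i) (\<omega> i) = set (verts (0, int i) (Lp i))"
  unfolding left_verts_def ..

lemma right_verts_eq: "right_verts (0, int i) (\<omega> i) = set (verts (endpoint (0, int i) (Lp i)) (Rp i))"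
  unfolding right_verts_def endpoint_def ..

lemma count_S_N:
  assumes "i \<in> {1..n}"
  shows "count_step StepS (\<omega> i) = count_step StepS (Lp i)" "count_step StepN (\<omega> i) = count_step StepN (Rp i)"
proof -
  have "count_step StepS (Rp i) = 0" "count_step StepN (Lp i) = 0"
    using left_right_parts(2,3)[OF assms] by (auto simp: filter_empty_conv)
  moreover have "count_step X (\<omega> i) = count_step X (Lp i @ Rp i)" for X
    using left_right_parts(1)[OF assms] by (rule arg_cong)
  ultimately show "count_step StepS (\<omega> i) = count_step StepS (Lp i)"
    "count_step StepN (\<omega> i) = count_step StepN (Rp i)"
    by simp_all
qed

lemma target_eq:
  assumes "i \<in> {1..n}"
  shows "int (target i) = int i - int (count_step StepS (\<omega> i)) + int (count_step StepN (\<omega> i))"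
    "int (target i) - 1 = int (count_step StepE (\<omega> i) + count_step StepF (\<omega> i) + count_step StepN (\<omega> i))"
  using target(3)[OF assms] endpoint_eq[of 0 "int i" "\<omega> i"] by simp_all

lemma sum_count_N: "(\<Sum>i\<in>{1..n}. count_step StepN (\<omega> i)) = 1"
proof -
  have "map (count_step StepN) ws = map (\<lambda>i. count_step StepN (\<omega> i)) [1..<n+1]"
    using length_ws by (intro nth_equalityI) (simp_all del: upt_Suc)
  then have "num_N ws = (\<Sum>i\<leftarrow>[1..<n+1]. count_step StepN (\<omega> i))"
    unfolding num_N_def by simp
  also have "\<dots> = (\<Sum>i\<in>{1..n}. count_step StepN (\<omega> i))"
    by (simp add: interv_sum_list_conv_sum_set_nat atLeastLessThanSuc_atLeastAtMost del: upt_Suc)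
  finally show ?thesis
    using in_MM unfolding MM_def by simp
qed

text \<open>The S-steps and N-steps balance, because the endpoints are a permutation of the rows.\<close>
lemma sum_count_S: "(\<Sum>i\<in>{1..n}. count_step StepS (\<omega> i)) = 1"
proof -
  have "(\<Sum>i\<in>{1..n}. int (target i)) = (\<Sum>i\<in>{1..n}. int i)"
    using sum.reindex_bij_betw[OF target(1), of int] by simp
  then have "(\<Sum>i\<in>{1..n}. int (count_step StepS (\<omega> i))) = (\<Sum>i\<in>{1..n}. int (count_step StepN (\<omega> i)))"
    using target_eq(1) by (simp add: sum.distrib sum_subtractf)
  then show ?thesis
    using sum_count_N by (metis of_nat_eq_iff of_nat_sum)
qed

definition down :: nat where
  "down = (SOME i. i \<in> {1..n} \<and> count_step StepS (\<omega> i) = 1 \<and>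
     (\<forall>x\<in>{1..n}. x \<noteq> i \<longrightarrow> count_step StepS (\<omega> x) = 0))"

definition up :: nat where
  "up = (SOME i. i \<in> {1..n} \<and> count_step StepN (\<omega> i) = 1 \<and>
     (\<forall>x\<in>{1..n}. x \<noteq> i \<longrightarrow> count_step StepN (\<omega> x) = 0))"

lemma down: "down \<in> {1..n}" "count_step StepS (\<omega> down) = 1"
    "\<forall>x\<in>{1..n}. x \<noteq> down \<longrightarrow> count_step StepS (\<omega> x) = 0"
  and up: "up \<in> {1..n}" "count_step StepN (\<omega> up) = 1"
    "\<forall>x\<in>{1..n}. x \<noteq> up \<longrightarrow> count_step StepN (\<omega> x) = 0"
proof -
  have "\<exists>i. i \<in> {1..n} \<and> count_step StepS (\<omega> i) = 1 \<and>
      (\<forall>x\<in>{1..n}. x \<noteq> i \<longrightarrow> count_step StepS (\<omega> x) = 0)"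
    by (rule sum_nat_eq_1[OF _ sum_count_S]) auto
  from someI_ex[OF this, folded down_def]
  show "down \<in> {1..n}" "count_step StepS (\<omega> down) = 1"
    "\<forall>x\<in>{1..n}. x \<noteq> down \<longrightarrow> count_step StepS (\<omega> x) = 0"
    by simp_all
  have "\<exists>i. i \<in> {1..n} \<and> count_step StepN (\<omega> i) = 1 \<and>
      (\<forall>x\<in>{1..n}. x \<noteq> i \<longrightarrow> count_step StepN (\<omega> x) = 0)"
    by (rule sum_nat_eq_1[OF _ sum_count_N]) auto
  from someI_ex[OF this, folded up_def]
  show "up \<in> {1..n}" "count_step StepN (\<omega> up) = 1"
    "\<forall>x\<in>{1..n}. x \<noteq> up \<longrightarrow> count_step StepN (\<omega> x) = 0"
    by simp_all
qed

lemma left_part_flat: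
  assumes "i \<in> {1..n}" "i \<noteq> down"
  shows "Lp i = replicate (length (Lp i)) StepE"
proof (rule replicate_of_count_zero)
  show "set (Lp i) \<subseteq> {StepE, StepS}"
    using left_right_parts(2)[OF assms(1)] by auto
  show "count_step StepS (Lp i) = 0"
    using down(3) assms count_S_N(1)[OF assms(1)] by simp
qed

lemma right_part_flat:
  assumes "i \<in> {1..n}" "i \<noteq> up"
  shows "Rp i = replicate (length (Rp i)) StepF"
proof (rule replicate_of_count_zero)
  show "set (Rp i) \<subseteq> {StepF, StepN}"
    using left_right_parts(3)[OF assms(1)] .
  show "count_step StepN (Rp i) = 0"
    using up(3) assms count_S_N(2)[OF assms(1)] by simp
qed

lemma left_part_down:
  obtains p u where "Lp down = replicate p StepE @ [StepS] @ replicate u StepE"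
proof (rule replicate_of_count_one)
  show "set (Lp down) \<subseteq> {StepE, StepS}"
    using left_right_parts(2)[OF down(1)] by auto
  show "count_step StepS (Lp down) = 1"
    using down(2) count_S_N(1)[OF down(1)] by simp
qed

lemma right_part_up:
  obtains v z where "Rp up = replicate v StepF @ [StepN] @ replicate z StepF"
proof (rule replicate_of_count_one)
  show "set (Rp up) \<subseteq> {StepF, StepN}"
    using left_right_parts(3)[OF up(1)] .
  show "count_step StepN (Rp up) = 1"
    using up(2) count_S_N(2)[OF up(1)] by simp
qed

lemma target_flat: "i \<in> {1..n} \<Longrightarrow> i \<noteq> down \<Longrightarrow> i \<noteq> up \<Longrightarrow> target i = i"
  using target_eq(1)[of i] down(3) up(3) by simp

lemma verts_replicate_E: "set (verts (x, y) (replicate m StepE)) = hseg y x (x + int m)"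
  and endpoint_replicate_E: "endpoint (x, y) (replicate m StepE) = (x + int m, y)"
  and verts_replicate_F: "set (verts (x, y) (replicate m StepF)) = hseg y x (x + int m)"
  using verts_horizontal by simp_all

lemma down_geometry:
  obtains p u where "Lp down = replicate p StepE @ [StepS] @ replicate u StepE"
    "(int p, int down - 1) \<in> left_verts (0, int down) (\<omega> down)"
    "(int p + int u, int down - 1) \<in> right_verts (0, int down) (\<omega> down)"
    "int p + int u < int down - 1"
proof -
  obtain p u where L: "Lp down = replicate p StepE @ [StepS] @ replicate u StepE"
    by (rule left_part_down)
  have "set (verts (0, int down) (Lp down)) =
      hseg (int down) 0 (int p) \<union> hseg (int down - 1) (int p) (int p + int u)"
    unfolding L set_verts_append endpoint_append endpoint_replicate_E
    by (auto simp: verts_replicate_E)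
  then have left: "(int p, int down - 1) \<in> left_verts (0, int down) (\<omega> down)"
    "(int p + int u, int down - 1) \<in> left_verts (0, int down) (\<omega> down)"
    unfolding left_verts_eq by auto
  have "endpoint (0, int down) (Lp down) = (int p + int u, int down - 1)"
    unfolding L endpoint_append by (simp add: endpoint_replicate_E)
  then have right: "(int p + int u, int down - 1) \<in> right_verts (0, int down) (\<omega> down)"
    unfolding right_verts_eq by (metis start_in_verts)
  have "left_verts (0, int down) (\<omega> down) \<subseteq> grid n"
    using target(2)[OF down(1)] left_right_parts(1)[OF down(1)] set_verts_append[of _ "Lp down" "Rp down"]
    unfolding mixed_path_def left_verts_eq by auto
  then have "int p + int u < int down - 1"
    using left(2) unfolding grid_def by auto
  then show thesis
    using that L left(1) right by blast
qed

lemma flat_geometry: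
  assumes "i \<in> {1..n}" "i \<noteq> down" "i \<noteq> up"
  obtains p r where "\<omega> i = replicate p StepE @ replicate r StepF" "int p + int r = int i - 1"
    "left_verts (0, int i) (\<omega> i) = hseg (int i) 0 (int p)"
    "right_verts (0, int i) (\<omega> i) = hseg (int i) (int p) (int p + int r)"
proof -
  define p r where "p = length (Lp i)" and "r = length (Rp i)"
  have w: "\<omega> i = replicate p StepE @ replicate r StepF"
    using left_right_parts(1)[OF assms(1)] left_part_flat[OF assms(1,2)] right_part_flat[OF assms(1,3)]
    unfolding p_def r_def by metis
  have "int p + int r = int i - 1"
    using target_eq(2)[OF assms(1)] target_flat[OF assms] unfolding w by simp
  moreover have "left_verts (0, int i) (\<omega> i) = hseg (int i) 0 (int p)"
    unfolding left_verts_eq using left_part_flat[OF assms(1,2)] unfolding p_def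
    by (metis verts_replicate_E add_0)
  moreover have "right_verts (0, int i) (\<omega> i) = hseg (int i) (int p) (int p + int r)"
    unfolding right_verts_eq using left_part_flat[OF assms(1,2)] right_part_flat[OF assms(1,3)]
    unfolding p_def r_def by (metis verts_replicate_F endpoint_replicate_E add_0)
  ultimately show thesis
    using that w by blast
qed

text \<open>The S-step of the down path lands on the row of the path below, which covers that row
  from 0 to its end; so it would meet that path in its Left part or at its junction.\<close>
lemma down_ne_up: "down \<noteq> up"
proof
  assume eq: "down = up"
  obtain p u where left: "(int p, int down - 1) \<in> left_verts (0, int down) (\<omega> down)"
    and right: "(int p + int u, int down - 1) \<in> right_verts (0, int down) (\<omega> down)"
    and lt: "int p + int u < int down - 1"
    by (rule down_geometry)
  let ?m = "down - 1"
  have m: "?m \<in> {1..n}" "?m \<noteq> down" "?m \<noteq> up" "int ?m = int down - 1" "down \<noteq> ?m"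
    using lt down(1) eq by auto
  obtain p' r' where "int p' + int r' = int ?m - 1"
    and lv: "left_verts (0, int ?m) (\<omega> ?m) = hseg (int ?m) 0 (int p')"
    and rv: "right_verts (0, int ?m) (\<omega> ?m) = hseg (int ?m) (int p') (int p' + int r')"
    by (rule flat_geometry[OF m(1-3)])
  show False
  proof (cases "p \<le> p'")
    case True
    then have "(int p, int down - 1) \<in> left_verts (0, int ?m) (\<omega> ?m)"
      unfolding lv using m(4) by simp
    then show False
      using left_verts_disjoint[OF down(1) m(1) m(5)] left by blast
  next
    case False
    then have "(int p + int u, int down - 1) \<in> right_verts (0, int ?m) (\<omega> ?m)"
      unfolding rv using m(4) lt \<open>int p' + int r' = int ?m - 1\<close> by simp
    then show False
      using right_verts_disjoint[OF down(1) m(1) m(5)] right by blast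
  qed
qed

lemma up_eq: "up = down - 1" "2 \<le> down"
proof -
  obtain p u where "int p + int u < int down - 1"
    by (rule down_geometry)
  then show two: "2 \<le> down"
    by linarith
  have "target down = down - 1"
    using target_eq(1)[OF down(1)] down(2) up(3) down(1) down_ne_up two by simp
  moreover have "target (down - 1) = down - 1" if "up \<noteq> down - 1"
  proof -
    have "down - 1 \<in> {1..n}" "down - 1 \<noteq> down" "down - 1 \<noteq> up"
      using that two down(1) by auto
    then show ?thesis
      by (rule target_flat)
  qed
  moreover have "down - 1 \<in> {1..n}" "down - 1 \<noteq> down"
    using two down(1) by auto
  ultimately show "up = down - 1"
    using target(1) down(1) unfolding bij_betw_def by (metis inj_onD)
qed

lemma up_geometry:
  obtains p v z where "Lp up = replicate p StepE" "Rp up = replicate v StepF @ [StepN] @ replicate z StepF"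
    "left_verts (0, int up) (\<omega> up) = hseg (int up) 0 (int p)"
    "hseg (int up) (int p) (int p + int v) \<subseteq> right_verts (0, int up) (\<omega> up)"
proof -
  define p where "p = length (Lp up)"
  have L: "Lp up = replicate p StepE"
    using left_part_flat[OF up(1)] down_ne_up unfolding p_def by metis
  obtain v z where R: "Rp up = replicate v StepF @ [StepN] @ replicate z StepF"
    by (rule right_part_up)
  have "left_verts (0, int up) (\<omega> up) = hseg (int up) 0 (int p)"
    unfolding left_verts_eq L by (simp add: verts_replicate_E)
  moreover have "hseg (int up) (int p) (int p + int v) \<subseteq> right_verts (0, int up) (\<omega> up)"
    unfolding right_verts_eq L R set_verts_append by (auto simp: verts_replicate_F endpoint_replicate_E)
  ultimately show thesis
    using that L R by blast
qed

lemma down_path: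
  obtains p u r where "\<omega> down = replicate p StepE @ [StepS] @ replicate u StepE @ replicate r StepF"
    "int p + int u + int r = int down - 2"
    "(int p, int down - 1) \<in> left_verts (0, int down) (\<omega> down)"
    "(int p + int u, int down - 1) \<in> right_verts (0, int down) (\<omega> down)"
proof -
  obtain p u where L: "Lp down = replicate p StepE @ [StepS] @ replicate u StepE"
    and left: "(int p, int down - 1) \<in> left_verts (0, int down) (\<omega> down)"
    and right: "(int p + int u, int down - 1) \<in> right_verts (0, int down) (\<omega> down)"
    by (rule down_geometry)
  define r where "r = length (Rp down)"
  have "\<omega> down = replicate p StepE @ [StepS] @ replicate u StepE @ replicate r StepF"
    using left_right_parts(1)[OF down(1)] right_part_flat[OF down(1) down_ne_up] L unfolding r_def
    by (metis append.assoc append_Cons)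
  moreover have "int (target down) = int down - 1"
    using target_eq(1)[OF down(1)] down(2) up(3) down(1) down_ne_up by simp
  ultimately have "int p + int u + int r = int down - 2"
    using target_eq(2)[OF down(1)] by simp
  then show thesis
    using that \<open>\<omega> down = _\<close> left right by blast
qed

lemma up_path:
  obtains p v z where "\<omega> up = replicate p StepE @ replicate v StepF @ [StepN] @ replicate z StepF"
    "int p + int v + 1 + int z = int up"
    "left_verts (0, int up) (\<omega> up) = hseg (int up) 0 (int p)"
    "hseg (int up) (int p) (int p + int v) \<subseteq> right_verts (0, int up) (\<omega> up)"
proof -
  obtain p v z where L: "Lp up = replicate p StepE" and R: "Rp up = replicate v StepF @ [StepN] @ replicate z StepF"
    and left: "left_verts (0, int up) (\<omega> up) = hseg (int up) 0 (int p)"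
    and right: "hseg (int up) (int p) (int p + int v) \<subseteq> right_verts (0, int up) (\<omega> up)"
    by (rule up_geometry)
  have w: "\<omega> up = replicate p StepE @ replicate v StepF @ [StepN] @ replicate z StepF"
    using left_right_parts(1)[OF up(1)] L R by simp
  have "int (target up) = int up + 1"
    using target_eq(1)[OF up(1)] up(2) down(3) up(1) down_ne_up by simp
  then have "int p + int v + 1 + int z = int up"
    using target_eq(2)[OF up(1)] unfolding w by simp
  then show thesis
    using that w left right by blast
qed

lemma config_of_table: "\<exists>t\<in>inversion_tables n. ws = table_config n t"
proof -
  define k where "k = down"
  have k: "2 \<le> k" "k \<le> n" "up = k - 1" "int (k - 1) = int k - 1"
    using up_eq down(1) unfolding k_def by auto
  obtain p u r where wk: "\<omega> k = replicate p StepE @ [StepS] @ replicate u StepE @ replicate r StepF"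
    and ek: "int p + int u + int r = int k - 2"
    and left_k: "(int p, int k - 1) \<in> left_verts (0, int k) (\<omega> k)"
    and right_k: "(int p + int u, int k - 1) \<in> right_verts (0, int k) (\<omega> k)"
    unfolding k_def by (rule down_path)
  obtain p1 v z where wk1: "\<omega> (k - 1) = replicate p1 StepE @ replicate v StepF @ [StepN] @ replicate z StepF"
    and ek1: "int p1 + int v + 1 + int z = int k - 1"
    and left_k1: "left_verts (0, int (k - 1)) (\<omega> (k - 1)) = hseg (int k - 1) 0 (int p1)"
    and right_k1: "hseg (int k - 1) (int p1) (int p1 + int v) \<subseteq> right_verts (0, int (k - 1)) (\<omega> (k - 1))"
    using up_path k(3,4) by metis
  have kk: "k \<in> {1..n}" "k - 1 \<in> {1..n}" "k \<noteq> k - 1"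
    using k by auto
  define a where "a i = (if i \<in> {1..n} then int (leading StepE (\<omega> i)) else 0)" for i
  have ak: "a k = int p" and ak1: "a (k - 1) = int p1"
    unfolding a_def using kk wk wk1 by (simp_all add: leading_replicate_other)
  have flat: "\<omega> i = E_run (a i) @ F_run (int i - 1 - a i) \<and> 0 \<le> a i \<and> a i \<le> int i - 1"
    if i: "i \<in> {1..n}" "i \<noteq> k - 1" "i \<noteq> k" for i
  proof -
    obtain p' r' where w: "\<omega> i = replicate p' StepE @ replicate r' StepF" "int p' + int r' = int i - 1"
      using flat_geometry[of i] i k(3) unfolding k_def by metis
    then have "a i = int p'"
      unfolding a_def using i(1) by (simp add: leading_replicate_other)
    then show ?thesis
      using w by (simp add: nat_eq_iff)
  qed
  have "a (k - 1) < a k"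
  proof (rule ccontr)
    assume "\<not> a (k - 1) < a k"
    then have "(int p, int k - 1) \<in> left_verts (0, int (k - 1)) (\<omega> (k - 1))"
      unfolding left_k1 using ak ak1 by simp
    then show False
      using left_verts_disjoint[OF kk] left_k by blast
  qed
  moreover have "a (k - 1) + int v < a k + int u"
  proof (rule ccontr)
    assume "\<not> a (k - 1) + int v < a k + int u"
    then have "(int p + int u, int k - 1) \<in> right_verts (0, int (k - 1)) (\<omega> (k - 1))"
      using right_k1 ak ak1 \<open>a (k - 1) < a k\<close> by force
    then show False
      using right_verts_disjoint[OF kk] right_k by blast
  qed
  ultimately have T: "(k, a, int u, int v) \<in> inversion_tables n"
    unfolding inversion_tables_def using k ak ak1 ek flat by (auto simp: a_def)
  have "ws ! j = table_config n (k, a, int u, int v) ! j" if "j < length ws" for j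
  proof -
    have i: "Suc j \<in> {1..n}"
      using that length_ws by simp
    consider "Suc j = k - 1" | "Suc j = k" | "Suc j \<noteq> k - 1" "Suc j \<noteq> k"
      by blast
    then have "\<omega> (Suc j) = table_path k a (int u) (int v) (Suc j)"
    proof cases
      case 1
      then show ?thesis
        unfolding table_path_def using wk1 ak1 ek1 k by (simp add: nat_eq_iff)
    next
      case 2
      then show ?thesis
        unfolding table_path_def using wk ak ek kk by (simp add: nat_eq_iff)
    qed (use flat[OF i] in \<open>simp add: table_path_def\<close>)
    then show ?thesis
      using table_config_nth[OF i] by simp
  qed
  then have "ws = table_config n (k, a, int u, int v)"
    using length_ws by (intro nth_equalityI) simp_all
  then show ?thesis
    using T by blast
qed

end

lemma MM_subset_table_config: "MM n 1 \<subseteq> table_config n ` inversion_tables n"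
  using config_one_N.config_of_table unfolding config_one_N_def by blast

theorem bij_betw_table_config: "bij_betw (table_config n) (inversion_tables n) (MM n 1)"
proof -
  have "table_config n t \<in> MM n 1" if "t \<in> inversion_tables n" for t
    using that table_config_in_MM by (cases t) simp
  then show ?thesis
    unfolding bij_betw_def using inj_on_table_config MM_subset_table_config by blast
qed

theorem theorem3:
  fixes n :: nat
  shows "bij_betw (Phi n) (NN1 n) (MM n 1)"
  unfolding Phi_eq_table_config
  using bij_betw_trans[OF bij_betw_inversion_table bij_betw_table_config] .

end
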